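(* Let $q=r^2$ where $r$ is an odd prime power, and let $q-1=e_1f_1=e_2f_2$ with positive integers $e_1,f_1,e_2,f_2$. Suppose there is an integer $l\geq 2$ with $e_1\equiv 2^l \pmod{2^{l+1}}$ and $2^l\mid e_2$. Suppose further that $2e_2\mid e_1(r+1)$ and $e_1\mid e_2(r-1)$. Let $D_1=\frac{e_1}{\gcd(e_1,e_2)}$, $D_2=\frac{e_2}{\gcd(e_1,e_2)}$, let $s,t$ be integers with $1\leq s\leq D_1$, $1\leq t\leq D_2$, and put $n_1=sf_1+tf_2$. Then: (1) if both $\frac{r+1}{2}\left(\frac{te_1}{e_2}+1\right)$ (i.e. the integer $\frac{te_1(r+1)}{2e_2}+\frac{r+1}{2}$) and $n_1$ are even, there exists a $q$-ary MDS self-dual code of length $n_1$; (2) if both $\frac{r+1}{2}\left(\frac{te_1}{e_2}+t\right)$ (i.e. the integer $\frac{te_1(r+1)}{2e_2}+\frac{t(r+1)}{2}$) and $\frac{(t-1)(r+1)}{2}$ are even, and $n_1$ is odd, there exists a $q$-ary MDS self-dual code of length $n_1+1$; (3) if $\frac{r+1}{2}\left(\frac{te_1}{e_2}+t\right)$, $\frac{(t-1)(r+1)}{2}$ and $n_1$ are all even, there exists a $q$-ary MDS self-dual code of length $n_1+2$.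
   Context: $\mathbb{F}_q$ denotes the finite field with $q$ elements. A linear code of length $n$ over $\mathbb{F}_q$ is a subspace of $\mathbb{F}_q^n$; an $[n,k,d]$ code has dimension $k$ and minimum Hamming distance $d$, and it is MDS if $d=n-k+1$. The (Euclidean) dual of a code $C$ is $C^\perp=\{x\in\mathbb{F}_q^n : \sum_i x_ic_i=0 \text{ for all } c\in C\}$; $C$ is self-dual if $C=C^\perp$. A $q$-ary MDS self-dual code of length $n$ is a linear code over $\mathbb{F}_q$ of length $n$ that is both MDS and self-dual. *)

theory Defs
  imports Main HOL.Vector_Spaces "HOL-Library.Function_Algebras" "HOL-Computational_Algebra.Primes"
begin

text \<open>Vectors of length n over a field 'a are represented as functions nat => 'a
  vanishing outside {0..<n}. The ambient space F^n is vecs n.\<close>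

definition vecs :: "nat \<Rightarrow> (nat \<Rightarrow> 'a::field) set" where
  "vecs n = {v. \<forall>i\<ge>n. v i = 0}"

definition vscale :: "'a::field \<Rightarrow> (nat \<Rightarrow> 'a) \<Rightarrow> (nat \<Rightarrow> 'a)" where
  "vscale c v = (\<lambda>i. c * v i)"

definition linear_code :: "nat \<Rightarrow> (nat \<Rightarrow> 'a::field) set \<Rightarrow> bool" where
  "linear_code n C \<longleftrightarrow> C \<subseteq> vecs n \<and> 0 \<in> C \<and>
     (\<forall>x\<in>C. \<forall>y\<in>C. x + y \<in> C) \<and> (\<forall>c. \<forall>x\<in>C. vscale c x \<in> C)"

definition code_dim :: "(nat \<Rightarrow> 'a::field) set \<Rightarrow> nat" where
  "code_dim C = vector_space.dim vscale C"

definition hweight :: "nat \<Rightarrow> (nat \<Rightarrow> 'a::field) \<Rightarrow> nat" where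
  "hweight n v = card {i. i < n \<and> v i \<noteq> 0}"

definition hdist :: "nat \<Rightarrow> (nat \<Rightarrow> 'a::field) \<Rightarrow> (nat \<Rightarrow> 'a) \<Rightarrow> nat" where
  "hdist n x y = card {i. i < n \<and> x i \<noteq> y i}"

definition min_dist :: "nat \<Rightarrow> (nat \<Rightarrow> 'a::field) set \<Rightarrow> nat" where
  "min_dist n C = Min {hdist n x y | x y. x \<in> C \<and> y \<in> C \<and> x \<noteq> y}"

definition is_MDS :: "nat \<Rightarrow> (nat \<Rightarrow> 'a::field) set \<Rightarrow> bool" where
  "is_MDS n C \<longleftrightarrow> min_dist n C = n - code_dim C + 1"

definition dual_code :: "nat \<Rightarrow> (nat \<Rightarrow> 'a::field) set \<Rightarrow> (nat \<Rightarrow> 'a) set" where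
  "dual_code n C = {x \<in> vecs n. \<forall>c\<in>C. (\<Sum>i<n. x i * c i) = 0}"

definition self_dual :: "nat \<Rightarrow> (nat \<Rightarrow> 'a::field) set \<Rightarrow> bool" where
  "self_dual n C \<longleftrightarrow> C = dual_code n C"

definition MDS_self_dual_code :: "nat \<Rightarrow> (nat \<Rightarrow> 'a::{field,finite}) set \<Rightarrow> bool" where
  "MDS_self_dual_code n C \<longleftrightarrow> linear_code n C \<and> is_MDS n C \<and> self_dual n C"

definition prime_power :: "nat \<Rightarrow> bool" where
  "prime_power r \<longleftrightarrow> (\<exists>p m. prime p \<and> m \<ge> 1 \<and> r = p ^ m)"

end

theory Submission
  imports Defs "HOL-Number_Theory.Residues" "HOL-Computational_Algebra.Polynomial"
begin

text \<open>The code is a generalized Reed--Solomon code, extended by one coordinate in cases (2)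
  and (3), on an evaluation set \<open>A\<close> of nonzero elements made of \<open>s\<close> cosets of the subgroup of
  index \<open>e1\<close> and \<open>t\<close> cosets, shifted by \<open>w^(e1/2)\<close>, of the subgroup of index \<open>e2\<close>
  (plus \<open>0\<close> in case (3)); \<open>w\<close> is a primitive element. Such a code can be made self-dual as soon
  as \<open>c * \<Prod>(a - b)\<close> (over \<open>b \<in> A - {a}\<close>) is a square for every \<open>a \<in> A\<close>, for a fixed
  \<open>c \<noteq> 0\<close> (\<open>c = -1\<close> for the extended code). Over a coset \<open>w^u H\<close> with \<open>|H| = f\<close>,
  \<open>\<Prod>(z - b) = z^f - w^(u f)\<close>,
  so the quadratic character of \<open>\<Prod>(a - b)\<close> is a product of characters of differences \<open>x - y\<close>
  where \<open>x, y\<close> either both lie in the subfield of order \<open>r\<close> (then \<open>x - y\<close> is a square) or both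
  satisfy \<open>x^(r+1) = 1\<close> (then the character is \<open>(-1)^h (xy)^h\<close> with \<open>h = (r+1)/2\<close>). The
  divisibility hypotheses make these characters equal to one common sign, and the parity
  hypotheses make that sign \<open>1\<close>, or allow it to be corrected by a non-square \<open>c\<close>.\<close>

section \<open>Lagrange interpolation\<close>

definition lagrange_basis :: "(nat \<Rightarrow> 'a::field) \<Rightarrow> nat \<Rightarrow> nat \<Rightarrow> 'a poly" where
  "lagrange_basis a n i = (\<Prod>j\<in>{..<n}-{i}. [:- a j, 1:])"

definition lagrange_denom :: "(nat \<Rightarrow> 'a::field) \<Rightarrow> nat \<Rightarrow> nat \<Rightarrow> 'a" where
  "lagrange_denom a n i = (\<Prod>j\<in>{..<n}-{i}. (a i - a j))"

definition lagrange_interp :: "(nat \<Rightarrow> 'a::field) \<Rightarrow> nat \<Rightarrow> (nat \<Rightarrow> 'a) \<Rightarrow> 'a poly" where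
  "lagrange_interp a n y = (\<Sum>i<n. smult (y i / lagrange_denom a n i) (lagrange_basis a n i))"

lemma degree_lagrange_basis: "i < n \<Longrightarrow> degree (lagrange_basis a n i) = n - 1"
  unfolding lagrange_basis_def by (subst degree_prod_sum_eq) auto

lemma coeff_lagrange_basis_top: "i < n \<Longrightarrow> coeff (lagrange_basis a n i) (n - 1) = 1"
  using lead_coeff_prod[of "\<lambda>j. [:- a j, 1:]" "{..<n}-{i}"] degree_lagrange_basis[of i n a]
  by (simp add: lagrange_basis_def)

lemma poly_lagrange_basis: "poly (lagrange_basis a n i) x = (\<Prod>j\<in>{..<n}-{i}. (x - a j))"
  unfolding lagrange_basis_def poly_prod by simp

lemma lagrange_denom_nonzero: "inj_on a {..<n} \<Longrightarrow> i < n \<Longrightarrow> lagrange_denom a n i \<noteq> 0"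
  unfolding lagrange_denom_def by (auto simp: inj_on_def)

lemma card_nodes_poly_eq_0_le_degree:
  fixes p :: "'a::field poly"
  assumes "inj_on a {..<n}" "p \<noteq> 0"
  shows "card {i. i < n \<and> poly p (a i) = 0} \<le> degree p"
proof -
  let ?Z = "{i. i < n \<and> poly p (a i) = 0}"
  have "card ?Z = card (a ` ?Z)"
    using assms(1) by (intro card_image[symmetric]) (auto intro: inj_on_subset)
  also have "\<dots> \<le> card {x. poly p x = 0}" by (intro card_mono poly_roots_finite assms) auto
  also have "\<dots> \<le> degree p" by (rule card_poly_roots_bound[OF assms(2)])
  finally show ?thesis .
qed

lemma poly_eq_0_if_vanishes_on:
  fixes p :: "'a::idom poly"
  assumes "degree p < card S" "\<forall>b\<in>S. poly p b = 0"
  shows "p = 0"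
proof (rule ccontr)
  assume "p \<noteq> 0"
  hence "card S \<le> card {x. poly p x = 0}" using assms(2) by (intro card_mono poly_roots_finite) auto
  also have "\<dots> \<le> degree p" by (rule card_poly_roots_bound[OF \<open>p \<noteq> 0\<close>])
  finally show False using assms(1) by simp
qed

lemma poly_eq_0_if_vanishes_on_nodes:
  fixes p :: "'a::field poly"
  assumes "inj_on a {..<n}" "degree p < n" "\<forall>i<n. poly p (a i) = 0"
  shows "p = 0"
  using assms by (intro poly_eq_0_if_vanishes_on[of p "a ` {..<n}"]) (auto simp: card_image)

lemma poly_lagrange_interp:
  assumes inj: "inj_on a {..<n}" and m: "m < n"
  shows "poly (lagrange_interp a n y) (a m) = y m"
proof -
  have "poly (lagrange_interp a n y) (a m)
      = (\<Sum>i<n. y i / lagrange_denom a n i * poly (lagrange_basis a n i) (a m))"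
    by (simp add: lagrange_interp_def poly_sum)
  also have "\<dots> = (\<Sum>i\<in>{m}. y i / lagrange_denom a n i * poly (lagrange_basis a n i) (a m))"
    by (rule sum.mono_neutral_right) (use m in \<open>auto simp: poly_lagrange_basis intro: prod_zero\<close>)
  also have "\<dots> = y m"
    using lagrange_denom_nonzero[OF inj m] by (simp add: poly_lagrange_basis lagrange_denom_def)
  finally show ?thesis .
qed

lemma degree_lagrange_interp_less: "n \<ge> 1 \<Longrightarrow> degree (lagrange_interp a n y) < n"
proof -
  assume "n \<ge> 1"
  moreover have "degree (lagrange_interp a n y) \<le> n - 1"
    unfolding lagrange_interp_def
    by (rule degree_sum_le) (auto intro: order.trans[OF degree_smult_le] simp: degree_lagrange_basis)
  ultimately show ?thesis by linarith
qed

lemma lagrange_sum_eq_coeff: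
  assumes inj: "inj_on a {..<n}" and deg: "degree p < n"
  shows "(\<Sum>i<n. poly p (a i) / lagrange_denom a n i) = coeff p (n - 1)"
proof -
  let ?L = "lagrange_interp a n (\<lambda>i. poly p (a i))"
  have "p - ?L = 0"
    using deg by (intro poly_eq_0_if_vanishes_on_nodes[OF inj])
      (auto intro!: degree_diff_less degree_lagrange_interp_less simp: poly_lagrange_interp[OF inj])
  hence "coeff p (n - 1) = coeff ?L (n - 1)" by simp
  also have "\<dots> = (\<Sum>i<n. poly p (a i) / lagrange_denom a n i)"
    unfolding lagrange_interp_def coeff_sum
    by (intro sum.cong) (simp_all add: coeff_lagrange_basis_top[simplified])
  finally show ?thesis ..
qed

section \<open>Self-dual generalized Reed--Solomon codes\<close>

interpretation V: vector_space "vscale :: 'a::field \<Rightarrow> (nat \<Rightarrow> 'a) \<Rightarrow> _"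
  by unfold_locales (auto simp: vscale_def fun_eq_iff algebra_simps)

lemma coeff_mult_top:
  fixes f g :: "'a::idom poly"
  assumes "degree f < k" "degree g < k"
  shows "coeff (f * g) (2 * k - 2) = coeff f (k - 1) * coeff g (k - 1)"
proof (cases "degree f = k - 1 \<and> degree g = k - 1")
  case True
  hence "2 * k - 2 = degree f + degree g" using assms by linarith
  thus ?thesis using True coeff_mult_degree_sum[of f g] by simp
next
  case False
  hence "coeff f (k - 1) * coeff g (k - 1) = 0"
    using assms by (auto intro!: coeff_eq_0 simp: order.strict_iff_order)
  moreover have "degree (f * g) < 2 * k - 2"
    using False assms degree_mult_le[of f g] by linarith
  ultimately show ?thesis by (simp add: coeff_eq_0)
qed

lemma coeff_mult_monom_one:
  fixes h :: "'a::comm_semiring_1 poly"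
  shows "coeff (h * monom 1 m) j = (if j < m then 0 else coeff h (j - m))"
  by (simp add: mult.commute[of h] coeff_monom_mult)

lemma hdist_le: "hdist n x y \<le> n"
  unfolding hdist_def using card_mono[of "{..<n}" "{i. i < n \<and> x i \<noteq> y i}"] by auto

text \<open>The codeword of a polynomial \<open>f\<close> is \<open>(v\<^sub>i f(a\<^sub>i))\<^sub>i\<^sub><\<^sub>n\<close>; if \<open>ext\<close> holds it is
  extended by the coefficient of \<open>x\<^sup>k\<^sup>-\<^sup>1\<close> (evaluation at infinity).\<close>

definition grs_word ::
  "(nat \<Rightarrow> 'a::field) \<Rightarrow> (nat \<Rightarrow> 'a) \<Rightarrow> nat \<Rightarrow> nat \<Rightarrow> bool \<Rightarrow> 'a poly \<Rightarrow> nat \<Rightarrow> 'a" where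
  "grs_word a v n k ext f =
     (\<lambda>i. if i < n then v i * poly f (a i) else if ext \<and> i = n then coeff f (k - 1) else 0)"

locale self_dual_grs =
  fixes a v :: "nat \<Rightarrow> 'a::field" and n k :: nat and ext :: bool and c :: 'a
  assumes inj: "inj_on a {..<n}" and k_pos: "k \<ge> 1"
    and v_sq: "\<And>i. i < n \<Longrightarrow> v i \<noteq> 0 \<and> (v i)\<^sup>2 * lagrange_denom a n i = c"
    and c_nonzero: "c \<noteq> 0"
    and length_eq: "(if ext then Suc n else n) = 2 * k"
    and c_ext: "ext \<Longrightarrow> c = -1"
begin

abbreviation "len \<equiv> if ext then Suc n else n"
abbreviation "word \<equiv> grs_word a v n k ext"

definition "code = word ` {f. degree f < k}"

lemma k_le_n: "k \<le> n"
  using length_eq k_pos by (cases ext) auto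

lemma word_add: "word (f + g) = word f + word g"
  by (auto simp: grs_word_def fun_eq_iff algebra_simps)

lemma word_diff: "word (f - g) = word f - word g"
  by (auto simp: grs_word_def fun_eq_iff algebra_simps)

lemma word_smult: "word (smult d f) = vscale d (word f)"
  by (auto simp: grs_word_def fun_eq_iff vscale_def)

lemma word_0: "word 0 = 0"
  by (auto simp: grs_word_def fun_eq_iff)

lemma word_sum: "word (\<Sum>i\<in>S. p i) = (\<Sum>i\<in>S. word (p i))"
  by (induction S rule: infinite_finite_induct) (auto simp: word_0 word_add)

lemma word_eq_0_iff: "degree f < k \<Longrightarrow> word f = 0 \<longleftrightarrow> f = 0"
proof
  assume "degree f < k" "word f = 0"
  hence "\<forall>i<n. poly f (a i) = 0"
    using v_sq by (auto simp: grs_word_def fun_eq_iff split: if_splits)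
  thus "f = 0"
    using \<open>degree f < k\<close> k_le_n by (intro poly_eq_0_if_vanishes_on_nodes[OF inj]) auto
qed (simp add: word_0)

lemma code_subset_vecs: "code \<subseteq> vecs len"
  by (auto simp: code_def vecs_def grs_word_def)

lemma linear_code: "linear_code len code"
  unfolding linear_code_def
proof (intro conjI ballI allI code_subset_vecs)
  show "0 \<in> code"
    unfolding code_def using k_pos by (auto intro!: image_eqI[of _ _ 0] simp: word_0)
  fix x y assume "x \<in> code" "y \<in> code"
  then obtain f g where "x = word f" "y = word g" "degree f < k" "degree g < k"
    by (auto simp: code_def)
  thus "x + y \<in> code"
    unfolding code_def by (auto intro!: image_eqI[of _ _ "f + g"] degree_add_less simp: word_add)
next
  fix d x assume "x \<in> code"
  then obtain f where "x = word f" "degree f < k" by (auto simp: code_def)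
  thus "vscale d x \<in> code"
    unfolding code_def
    by (auto intro!: image_eqI[of _ _ "smult d f"] intro: le_less_trans[OF degree_smult_le]
        simp: word_smult)
qed

definition "basis = (\<lambda>m. word (monom 1 m)) ` {..<k}"

lemma inj_on_word_monom: "inj_on (\<lambda>m. word (monom 1 m)) {..<k}"
proof
  fix m m' assume m: "m \<in> {..<k}" "m' \<in> {..<k}" and eq: "word (monom 1 m) = word (monom 1 m')"
  have "degree (monom 1 m - monom 1 m' :: 'a poly) < k"
    using m by (intro degree_diff_less) (auto intro: le_less_trans[OF degree_monom_le])
  moreover have "word (monom 1 m - monom 1 m') = 0" using eq by (simp add: word_diff)
  ultimately have "monom 1 m - monom 1 m' = (0 :: 'a poly)" using word_eq_0_iff by blast
  hence "coeff (monom 1 m - monom 1 m' :: 'a poly) m = 0" by simp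
  thus "m = m'" by (auto split: if_splits)
qed

lemma independent_basis: "V.independent basis"
proof
  assume "V.dependent basis"
  then obtain u where u: "\<exists>x\<in>basis. u x \<noteq> 0" "(\<Sum>x\<in>basis. vscale (u x) x) = 0"
    using V.dependent_finite[of basis] by (auto simp: basis_def)
  define p where "p = (\<Sum>m<k. monom (u (word (monom 1 m))) m)"
  have "(\<Sum>x\<in>basis. vscale (u x) x) = (\<Sum>m<k. vscale (u (word (monom 1 m))) (word (monom 1 m)))"
    unfolding basis_def by (rule sum.reindex[OF inj_on_word_monom, unfolded comp_def])
  also have "\<dots> = word p"
    unfolding p_def word_sum by (intro sum.cong) (auto simp flip: word_smult simp: smult_monom)
  finally have "word p = 0" using u by simp
  moreover have "degree p < k"
    unfolding p_def using k_pos
    by (intro order.strict_trans1[OF degree_sum_le[of _ _ "k - 1"]])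
      (auto intro: order.trans[OF degree_monom_le])
  ultimately have "p = 0" using word_eq_0_iff by blast
  from u obtain m where m: "m < k" "u (word (monom 1 m)) \<noteq> 0" by (auto simp: basis_def)
  have "coeff p m = u (word (monom 1 m))"
    unfolding p_def coeff_sum using m by simp
  thus False using m \<open>p = 0\<close> by simp
qed

lemma span_basis: "V.span basis = code"
proof (rule V.span_subspace)
  show "basis \<subseteq> code"
    unfolding basis_def code_def by (auto intro: le_less_trans[OF degree_monom_le])
  show "V.subspace code"
    using linear_code unfolding V.subspace_def linear_code_def by auto
  show "code \<subseteq> V.span basis"
  proof
    fix x assume "x \<in> code"
    then obtain f where f: "x = word f" "degree f < k" by (auto simp: code_def)
    have "f = (\<Sum>m\<le>k - 1. monom (coeff f m) m)"
      using f by (intro poly_as_sum_of_monoms'[symmetric]) simp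
    also have "\<dots> = (\<Sum>m<k. smult (coeff f m) (monom 1 m))"
      using k_pos by (intro sum.cong) (auto simp: smult_monom)
    finally have "x = (\<Sum>m<k. vscale (coeff f m) (word (monom 1 m)))"
      using f by (metis (no_types, lifting) word_smult word_sum sum.cong)
    also have "\<dots> \<in> V.span basis"
      by (intro V.span_sum V.span_scale V.span_base) (auto simp: basis_def)
    finally show "x \<in> V.span basis" .
  qed
qed

lemma code_dim: "code_dim code = k"
  unfolding code_dim_def
  using span_basis V.dim_span[of basis] V.dim_eq_card_independent[OF independent_basis]
    card_image[OF inj_on_word_monom]
  by (simp add: basis_def)

lemma weight_word_ge:
  assumes "degree f < k" "f \<noteq> 0"
  shows "len - k + 1 \<le> card {i. i < len \<and> word f i \<noteq> 0}"
proof -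
  let ?W = "{i. i < n \<and> word f i \<noteq> 0}"
  let ?Z = "{i. i < n \<and> poly f (a i) = 0}"
  have "?W = {..<n} - ?Z"
    using v_sq by (auto simp: grs_word_def)
  hence "card ?W = n - card ?Z" using card_Diff_subset[of ?Z "{..<n}"] by auto
  hence W: "card ?W \<ge> n - degree f"
    using card_nodes_poly_eq_0_le_degree[OF inj assms(2)] by linarith
  show ?thesis
  proof (cases "ext \<and> coeff f (k - 1) \<noteq> 0")
    case True
    hence "insert n ?W \<subseteq> {i. i < len \<and> word f i \<noteq> 0}" by (auto simp: grs_word_def)
    hence "Suc (card ?W) \<le> card {i. i < len \<and> word f i \<noteq> 0}"
      using card_mono[of _ "insert n ?W"] by fastforce
    thus ?thesis using W True assms(1) k_le_n by simp
  next
    case False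
    have "card ?W \<le> card {i. i < len \<and> word f i \<noteq> 0}" by (intro card_mono) auto
    moreover have "degree f < k - 1" if ext
    proof -
      have "degree f \<noteq> k - 1" using False that assms(2) by (metis leading_coeff_0_iff)
      thus ?thesis using assms(1) by linarith
    qed
    ultimately show ?thesis using W assms(1) k_le_n by (cases ext) auto
  qed
qed

lemma weight_word_min: "\<exists>f. degree f < k \<and> f \<noteq> 0 \<and> card {i. i < len \<and> word f i \<noteq> 0} = len - k + 1"
proof -
  define f where "f = (\<Prod>j<k-1. [:- a j, 1:])"
  have deg: "degree f = k - 1" unfolding f_def by (subst degree_prod_sum_eq) auto
  have lead: "coeff f (k - 1) = 1"
    using lead_coeff_prod[of "\<lambda>j. [:- a j, 1:]" "{..<k-1}"] deg by (simp add: f_def)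
  have nz: "poly f (a i) \<noteq> 0 \<longleftrightarrow> k - 1 \<le> i" if "i < n" for i
  proof -
    have "(\<exists>j<k-1. a i = a j) \<longleftrightarrow> i < k - 1"
    proof
      assume "\<exists>j<k-1. a i = a j"
      then obtain j where "j < k - 1" "a i = a j" by blast
      thus "i < k - 1" using inj_onD[OF inj \<open>a i = a j\<close>] that k_le_n by simp
    qed blast
    moreover have "poly f (a i) = 0 \<longleftrightarrow> (\<exists>j<k-1. a i = a j)"
      by (simp add: f_def poly_prod lessThan_iff Bex_def)
    ultimately show ?thesis by auto
  qed
  have "word f i \<noteq> 0 \<longleftrightarrow> k - 1 \<le> i" if "i < len" for i
  proof (cases "i < n")
    case True
    thus ?thesis using v_sq[OF True] nz[OF True] by (simp add: grs_word_def)
  next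
    case False
    hence "ext" "i = n" using that by (auto split: if_splits)
    thus ?thesis using lead k_le_n by (simp add: grs_word_def)
  qed
  hence "{i. i < len \<and> word f i \<noteq> 0} = {k-1..<len}"
    by (auto simp only: set_eq_iff mem_Collect_eq atLeastLessThan_iff)
  moreover have "card {k-1..<len} = len - k + 1" using k_pos k_le_n by (cases ext) auto
  moreover have "f \<noteq> 0" "degree f < k" using lead deg k_pos by auto
  ultimately show ?thesis by metis
qed

lemma hdist_word: "hdist len (word f) (word g) = card {i. i < len \<and> word (f - g) i \<noteq> 0}"
  unfolding hdist_def word_diff by simp

lemma min_dist_code: "min_dist len code = len - k + 1"
  unfolding min_dist_def
proof (rule Min_eqI)
  have "{hdist len x y |x y. x \<in> code \<and> y \<in> code \<and> x \<noteq> y} \<subseteq> {..len}"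
    using hdist_le[of len] by auto
  thus "finite {hdist len x y |x y. x \<in> code \<and> y \<in> code \<and> x \<noteq> y}"
    by (rule finite_subset) simp
next
  fix d assume "d \<in> {hdist len x y |x y. x \<in> code \<and> y \<in> code \<and> x \<noteq> y}"
  then obtain f g where fg: "d = hdist len (word f) (word g)" "degree f < k" "degree g < k"
    "word f \<noteq> word g"
    by (auto simp: code_def)
  have "f - g \<noteq> 0" using fg(4) by auto
  thus "len - k + 1 \<le> d"
    unfolding fg(1) hdist_word by (intro weight_word_ge) (auto intro: degree_diff_less fg)
next
  obtain f where f: "degree f < k" "f \<noteq> 0" "card {i. i < len \<and> word f i \<noteq> 0} = len - k + 1"
    using weight_word_min by blast
  hence "word f \<noteq> word 0" using word_eq_0_iff word_0 by metis
  moreover have "len - k + 1 = hdist len (word f) (word 0)" using f hdist_word[of f 0] by simp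
  moreover have "word f \<in> code" "word 0 \<in> code" using f k_pos by (auto simp: code_def)
  ultimately show "len - k + 1 \<in> {hdist len x y |x y. x \<in> code \<and> y \<in> code \<and> x \<noteq> y}"
    by blast
qed

lemma sum_weighted_poly_eq_coeff:
  assumes "degree p < n"
  shows "(\<Sum>i<n. (v i)\<^sup>2 * poly p (a i)) = c * coeff p (n - 1)"
proof -
  have "(\<Sum>i<n. (v i)\<^sup>2 * poly p (a i)) = (\<Sum>i<n. c * (poly p (a i) / lagrange_denom a n i))"
  proof (intro sum.cong refl)
    fix i assume "i \<in> {..<n}"
    hence "lagrange_denom a n i \<noteq> 0" "(v i)\<^sup>2 * lagrange_denom a n i = c"
      using lagrange_denom_nonzero[OF inj] v_sq by auto
    thus "(v i)\<^sup>2 * poly p (a i) = c * (poly p (a i) / lagrange_denom a n i)"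
      by (auto simp: field_simps)
  qed
  also have "\<dots> = c * coeff p (n - 1)"
    by (simp only: lagrange_sum_eq_coeff[OF inj assms] flip: sum_distrib_left)
  finally show ?thesis .
qed

lemma inner_word:
  "(\<Sum>i<len. x i * word g i) =
     (\<Sum>i<n. x i * (v i * poly g (a i))) + (if ext then x n * coeff g (k - 1) else 0)"
  by (cases ext) (auto simp: grs_word_def intro!: sum.cong)

text \<open>By \<open>sum_weighted_poly_eq_coeff\<close>, the inner product of the words of \<open>f\<close> and \<open>g\<close> is
  \<open>c\<close> times the coefficient of \<open>x\<^sup>n\<^sup>-\<^sup>1\<close> in \<open>fg\<close>; it vanishes when \<open>len = n\<close>, and cancels
  the extension coordinate when \<open>c = -1\<close>.\<close>

lemma code_subset_dual: "code \<subseteq> dual_code len code"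
proof
  fix x assume "x \<in> code"
  then obtain f where f: "x = word f" "degree f < k" by (auto simp: code_def)
  show "x \<in> dual_code len code" unfolding dual_code_def
  proof (intro CollectI conjI ballI)
    show "x \<in> vecs len" using code_subset_vecs \<open>x \<in> code\<close> by auto
    fix y assume "y \<in> code"
    then obtain g where g: "y = word g" "degree g < k" by (auto simp: code_def)
    have deg: "degree (f * g) \<le> 2 * k - 2"
      using degree_mult_le[of f g] f g by linarith
    moreover have "2 * k - 1 \<le> n" using length_eq by (cases ext) auto
    ultimately have "degree (f * g) < n" using k_pos by linarith
    have "(\<Sum>i<len. x i * y i) = (\<Sum>i<n. (v i)\<^sup>2 * poly (f * g) (a i))
        + (if ext then coeff f (k - 1) * coeff g (k - 1) else 0)"
      unfolding g inner_word by (auto simp: f grs_word_def power2_eq_square intro!: sum.cong)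
    also have "\<dots> = c * coeff (f * g) (n - 1)
        + (if ext then coeff f (k - 1) * coeff g (k - 1) else 0)"
      by (simp only: sum_weighted_poly_eq_coeff[OF \<open>degree (f * g) < n\<close>])
    also have "\<dots> = 0"
    proof (cases ext)
      case True
      hence "n - 1 = 2 * k - 2" using length_eq by simp
      thus ?thesis using True c_ext coeff_mult_top[OF f(2) g(2)] by simp
    next
      case False
      hence "coeff (f * g) (n - 1) = 0" using length_eq deg k_pos by (intro coeff_eq_0) simp
      thus ?thesis using False by simp
    qed
    finally show "(\<Sum>i<len. x i * y i) = 0" .
  qed
qed

definition "dual_poly x = lagrange_interp a n (\<lambda>i. x i / v i)"

lemma degree_dual_poly_less_n: "degree (dual_poly x) < n"
  unfolding dual_poly_def using k_le_n k_pos by (intro degree_lagrange_interp_less) simp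

lemma word_nodes_dual_poly: "i < n \<Longrightarrow> x i = v i * poly (dual_poly x) (a i)"
  using v_sq poly_lagrange_interp[OF inj] by (simp add: dual_poly_def)

lemma coeff_dual_poly_monom:
  assumes x: "x \<in> dual_code len code" and m: "m < k"
    and deg: "degree (dual_poly x * monom 1 m) < n"
  shows "c * coeff (dual_poly x * monom 1 m) (n - 1) + (if ext \<and> m = k - 1 then x n else 0) = 0"
proof -
  let ?h = "dual_poly x"
  have "c * coeff (?h * monom 1 m) (n - 1) + (if ext \<and> m = k - 1 then x n else 0)
      = (\<Sum>i<n. (v i)\<^sup>2 * poly (?h * monom 1 m) (a i))
        + (if ext then x n * coeff (monom 1 m) (k - 1) else 0)"
    by (subst sum_weighted_poly_eq_coeff[OF deg]) (simp add: coeff_monom)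
  also have "\<dots> = (\<Sum>i<len. x i * word (monom 1 m) i)"
    unfolding inner_word
    by (intro arg_cong2[where f = "(+)"] sum.cong)
      (auto simp: word_nodes_dual_poly[of _ x] poly_monom power2_eq_square)
  also have "\<dots> = 0"
  proof -
    have "word (monom 1 m) \<in> code"
      using m unfolding code_def by (auto intro: le_less_trans[OF degree_monom_le])
    thus ?thesis using x unfolding dual_code_def by blast
  qed
  finally show ?thesis .
qed

text \<open>Multiplying the interpolating polynomial of \<open>x\<close> by the monomial that moves its leading
  term to degree \<open>n - 1\<close> would expose that term in the inner product with a codeword.\<close>

lemma degree_dual_poly_less:
  assumes x: "x \<in> dual_code len code"
  shows "degree (dual_poly x) < k"
proof (rule ccontr)
  let ?h = "dual_poly x"
  assume "\<not> degree ?h < k"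
  hence deg: "degree ?h \<ge> k" "?h \<noteq> 0" using k_pos by auto
  define m where "m = n - 1 - degree ?h"
  have m: "m < k" "ext \<Longrightarrow> m \<noteq> k - 1"
    using deg degree_dual_poly_less_n[of x] length_eq k_pos by (auto simp: m_def split: if_splits)
  have "degree (?h * monom 1 m) = n - 1"
    using deg degree_dual_poly_less_n[of x] by (simp add: degree_mult_eq degree_monom_eq m_def)
  hence "c * coeff (?h * monom 1 m) (n - 1) + (if ext \<and> m = k - 1 then x n else 0) = 0"
    using degree_dual_poly_less_n[of x] by (intro coeff_dual_poly_monom[OF x m(1)]) simp
  hence "c * coeff (?h * monom 1 m) (n - 1) = 0" using m(2) by (simp split: if_splits)
  moreover have "coeff (?h * monom 1 m) (n - 1) = lead_coeff ?h"
    unfolding coeff_mult_monom_one using degree_dual_poly_less_n[of x] by (simp add: m_def)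
  ultimately show False using c_nonzero deg by simp
qed

lemma dual_subset_code: "dual_code len code \<subseteq> code"
proof
  fix x assume x: "x \<in> dual_code len code"
  let ?h = "dual_poly x"
  have "x i = word ?h i" for i
  proof (cases "i < n")
    case True
    thus ?thesis by (simp add: word_nodes_dual_poly[of i x] grs_word_def)
  next
    case False
    show ?thesis
    proof (cases "ext \<and> i = n")
      case True
      have deg: "degree (?h * monom 1 (k - 1)) < n"
        using degree_mult_le[of ?h "monom 1 (k - 1)"] degree_monom_le[of "1::'a" "k - 1"]
          degree_dual_poly_less[OF x] length_eq True k_pos
        by simp
      hence "c * coeff (?h * monom 1 (k - 1)) (n - 1) + x n = 0"
        using coeff_dual_poly_monom[OF x _ deg] k_pos True by simp
      moreover have "coeff (?h * monom 1 (k - 1)) (n - 1) = coeff ?h (k - 1)"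
      proof -
        have "n - 1 - (k - 1) = k - 1" "\<not> n - 1 < k - 1" using length_eq True k_pos by auto
        thus ?thesis unfolding coeff_mult_monom_one by simp
      qed
      ultimately show ?thesis using True c_ext by (simp add: grs_word_def)
    next
      case False
      hence "len \<le> i" using \<open>\<not> i < n\<close> by auto
      moreover have "x \<in> vecs len" using x by (simp add: dual_code_def)
      ultimately show ?thesis using False \<open>\<not> i < n\<close> by (auto simp: vecs_def grs_word_def)
    qed
  qed
  thus "x \<in> code" using degree_dual_poly_less[OF x] by (auto simp: code_def)
qed

lemma MDS_self_dual: "linear_code len code \<and> is_MDS len code \<and> self_dual len code"
  using linear_code code_subset_dual dual_subset_code
  unfolding self_dual_def is_MDS_def min_dist_code code_dim by auto

end

lemma lagrange_denom_bij_betw: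
  assumes "bij_betw a {..<n} S" "i < n"
  shows "lagrange_denom a n i = (\<Prod>y\<in>S-{a i}. (a i - y))"
proof -
  have "bij_betw a ({..<n} - {i}) (S - {a i})"
    using assms by (metis bij_betw_DiffI bij_betw_singletonI empty_subsetI insert_subset
        lessThan_iff bij_betwE)
  thus ?thesis
    unfolding lagrange_denom_def using prod.reindex_bij_betw[of a "{..<n} - {i}" "S - {a i}"]
    by simp
qed

text \<open>The hypothesis says that \<open>c\<close> times the derivative of \<open>\<Prod>b\<in>S. (x - b)\<close> at each
  \<open>b \<in> S\<close> is a square.\<close>

lemma grs_multipliers_of_squares:
  fixes S :: "'a::field set" and c :: 'a
  assumes "finite S" "c \<noteq> 0" and sq: "\<forall>b\<in>S. \<exists>y. y\<^sup>2 = c * (\<Prod>z\<in>S-{b}. (b - z))"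
  shows "\<exists>a v. inj_on a {..<card S} \<and>
    (\<forall>i<card S. v i \<noteq> 0 \<and> (v i)\<^sup>2 * lagrange_denom a (card S) i * c = 1)"
proof -
  obtain a where a: "bij_betw a {..<card S} S"
    using ex_bij_betw_nat_finite[OF assms(1)] by (auto simp: atLeast0LessThan)
  have inj: "inj_on a {..<card S}" using a by (simp add: bij_betw_def)
  have "\<forall>i. \<exists>y. i < card S \<longrightarrow> y\<^sup>2 = c * lagrange_denom a (card S) i"
    using sq lagrange_denom_bij_betw[OF a] bij_betwE[OF a] by (metis lessThan_iff)
  then obtain y where y: "\<And>i. i < card S \<Longrightarrow> (y i)\<^sup>2 = c * lagrange_denom a (card S) i"
    by metis
  have "y i \<noteq> 0" if "i < card S" for i
    using y[OF that] assms(2) lagrange_denom_nonzero[OF inj that] by force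
  hence "1 / y i \<noteq> 0 \<and> (1 / y i)\<^sup>2 * lagrange_denom a (card S) i * c = 1" if "i < card S" for i
    using that y[OF that] assms(2) by (auto simp: field_simps power2_eq_square)
  with inj show ?thesis by (intro exI[of _ a] exI[of _ "\<lambda>i. 1 / y i"]) simp
qed

lemma MDS_self_dual_code_of_squares:
  fixes S :: "'a::{field,finite} set" and c :: 'a
  assumes "even (card S)" "S \<noteq> {}" "c \<noteq> 0"
    and "\<forall>b\<in>S. \<exists>y. y\<^sup>2 = c * (\<Prod>z\<in>S-{b}. (b - z))"
  shows "\<exists>C :: (nat \<Rightarrow> 'a) set. MDS_self_dual_code (card S) C"
proof -
  obtain a v where av: "inj_on a {..<card S}"
    "\<forall>i<card S. v i \<noteq> 0 \<and> (v i)\<^sup>2 * lagrange_denom a (card S) i * c = 1"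
    using grs_multipliers_of_squares[OF finite assms(3,4)] by blast
  from assms(1) obtain k where k: "card S = 2 * k" by (rule evenE)
  moreover have "card S > 0" using assms(2) by (simp add: card_gt_0_iff)
  ultimately interpret self_dual_grs a v "card S" k False "1 / c"
    using av assms(3) by unfold_locales (auto simp: field_simps)
  show ?thesis using MDS_self_dual unfolding MDS_self_dual_code_def by auto
qed

lemma MDS_self_dual_code_extended_of_squares:
  fixes S :: "'a::{field,finite} set"
  assumes "odd (card S)" and "\<forall>b\<in>S. \<exists>y. y\<^sup>2 = - (\<Prod>z\<in>S-{b}. (b - z))"
  shows "\<exists>C :: (nat \<Rightarrow> 'a) set. MDS_self_dual_code (card S + 1) C"
proof -
  have sq: "\<forall>b\<in>S. \<exists>y. y\<^sup>2 = -1 * (\<Prod>z\<in>S-{b}. (b - z))"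
    using assms(2) by simp
  have "(-1 :: 'a) \<noteq> 0" by simp
  then obtain a v :: "nat \<Rightarrow> 'a" where av: "inj_on a {..<card S}"
    "\<forall>i<card S. v i \<noteq> 0 \<and> (v i)\<^sup>2 * lagrange_denom a (card S) i * -1 = 1"
    using grs_multipliers_of_squares[OF finite[of S] _ sq] by blast
  have "even (Suc (card S))" using assms(1) by simp
  then obtain k where k: "Suc (card S) = 2 * k" by (rule evenE)
  interpret self_dual_grs a v "card S" k True "-1"
    using av k by unfold_locales (auto simp: minus_equation_iff[of _ 1])
  show ?thesis using MDS_self_dual unfolding MDS_self_dual_code_def by auto
qed

section \<open>Finite fields\<close>

definition class_ring :: "'a::field ring" where
  "class_ring = \<lparr>carrier = UNIV, monoid.mult = (*), one = 1, zero = 0, add = (+)\<rparr>"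

lemma field_class_ring: "field (class_ring :: 'a::field ring)"
proof -
  have "cring (class_ring :: 'a ring)"
  proof (rule cringI)
    show "abelian_group (class_ring :: 'a ring)"
      by (rule abelian_groupI) (auto simp: class_ring_def add_ac intro: add.right_inverse)
    show "comm_monoid (class_ring :: 'a ring)"
      by (rule comm_monoidI) (auto simp: class_ring_def mult_ac)
  qed (simp add: class_ring_def distrib_right)
  thus ?thesis
  proof (rule cring.cring_fieldI2)
    fix x :: 'a assume "x \<noteq> \<zero>\<^bsub>class_ring\<^esub>"
    thus "\<exists>y\<in>carrier class_ring. x \<otimes>\<^bsub>class_ring\<^esub> y = \<one>\<^bsub>class_ring\<^esub>"
      by (intro bexI[of _ "inverse x"]) (auto simp: class_ring_def)
  qed (simp add: class_ring_def)
qed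

lemma pow_class_ring: "x [^]\<^bsub>(class_ring :: 'a::field ring)\<^esub> (i::nat) = x ^ i"
  by (induction i) (auto simp: class_ring_def)

lemma finite_field_has_primitive_element:
  "\<exists>w::'a::{field,finite}. w \<noteq> 0 \<and> (\<forall>x. x \<noteq> 0 \<longrightarrow> (\<exists>i. x = w ^ i))"
proof -
  have "finite (carrier (class_ring :: 'a ring))" by simp
  from field.finite_field_mult_group_has_gen[OF field_class_ring this]
  obtain w :: 'a where w: "w \<in> carrier (mult_of class_ring)"
    "carrier (mult_of class_ring) = {w [^]\<^bsub>class_ring\<^esub> (i::nat) |i. i \<in> UNIV}"
    by blast
  from w(2) have "UNIV - {0} = {w ^ i |i. i \<in> UNIV}"
    by (simp add: pow_class_ring) (simp add: class_ring_def)
  moreover from w(1) have "w \<noteq> 0" by (simp add: class_ring_def)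
  ultimately show ?thesis by blast
qed

lemma power_card_minus_one:
  fixes x :: "'a::{field,finite}"
  assumes "x \<noteq> 0"
  shows "x ^ (card (UNIV :: 'a set) - 1) = 1"
proof -
  have "(\<Prod>y\<in>UNIV-{0}. x * y) = (\<Prod>y\<in>UNIV-{0}. y)"
    by (rule prod.reindex_bij_witness[of _ "\<lambda>y. y / x" "\<lambda>y. x * y"]) (use assms in auto)
  moreover have "(\<Prod>y\<in>UNIV-{0}. x * y) = x ^ card (UNIV - {0::'a}) * (\<Prod>y\<in>UNIV-{0}. y)"
    by (simp add: prod.distrib)
  moreover have "(\<Prod>y\<in>UNIV-{0::'a}. y) \<noteq> 0" by simp
  ultimately show ?thesis by (simp add: card_Diff_singleton)
qed

locale primitive_element =
  fixes q :: nat and w :: "'a::{field,finite}"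
  assumes card_UNIV: "card (UNIV :: 'a set) = q"
    and w_nonzero: "w \<noteq> 0" and w_generates: "\<And>x. x \<noteq> 0 \<Longrightarrow> \<exists>i. x = w ^ i"
begin

lemma q_ge_2: "q \<ge> 2"
  using card_mono[of UNIV "{0, 1 :: 'a}"] card_UNIV by simp

lemma power_eq_one_iff_dvd: "w ^ k = 1 \<longleftrightarrow> (q - 1) dvd k"
proof
  assume "(q - 1) dvd k"
  then obtain d where "k = (q - 1) * d" ..
  thus "w ^ k = 1" using power_card_minus_one[OF w_nonzero] card_UNIV by (simp add: power_mult)
next
  assume wk: "w ^ k = 1"
  define k' where "k' = k mod (q - 1)"
  have "w ^ k = w ^ ((q - 1) * (k div (q - 1)) + k')"
    unfolding k'_def by (simp only: mult_div_mod_eq)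
  also have "\<dots> = (w ^ (q - 1)) ^ (k div (q - 1)) * w ^ k'"
    by (simp only: power_add power_mult)
  finally have wk': "w ^ k' = 1" using wk power_card_minus_one[OF w_nonzero] card_UNIV by simp
  show "(q - 1) dvd k"
  proof (rule ccontr)
    assume "\<not> (q - 1) dvd k"
    hence "k' > 0" unfolding k'_def by (metis mod_0_imp_dvd neq0_conv)
    have mod: "w ^ i = w ^ (i mod k')" for i
    proof -
      have "w ^ i = w ^ (k' * (i div k') + i mod k')" by (simp only: mult_div_mod_eq)
      also have "\<dots> = (w ^ k') ^ (i div k') * w ^ (i mod k')"
        by (simp only: power_add power_mult)
      finally show ?thesis using wk' by simp
    qed
    have "UNIV - {0} \<subseteq> (\<lambda>i. w ^ i) ` {..<k'}"
    proof
      fix x :: 'a assume "x \<in> UNIV - {0}"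
      then obtain i where "x = w ^ i" using w_generates by auto
      thus "x \<in> (\<lambda>i. w ^ i) ` {..<k'}"
        using \<open>k' > 0\<close> mod[of i] by (intro image_eqI[of _ _ "i mod k'"]) auto
    qed
    hence "card (UNIV - {0::'a}) \<le> card ((\<lambda>i. w ^ i) ` {..<k'})" by (intro card_mono) auto
    also have "\<dots> \<le> k'" using card_image_le[of "{..<k'}" "\<lambda>i. w ^ i"] by simp
    finally have "card (UNIV - {0::'a}) \<le> k'" .
    moreover have "k' < q - 1" using q_ge_2 by (simp add: k'_def)
    ultimately show False using card_UNIV by (simp add: card_Diff_singleton)
  qed
qed

lemma power_eq_power_iff: "w ^ a = w ^ b \<longleftrightarrow> [a = b] (mod q - 1)"
proof -
  have *: "w ^ a = w ^ b \<longleftrightarrow> [a = b] (mod q - 1)" if "a \<le> b" for a b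
  proof -
    have "w ^ b = w ^ a * w ^ (b - a)" using that by (simp flip: power_add)
    hence "w ^ a = w ^ b \<longleftrightarrow> w ^ (b - a) = 1" using w_nonzero by auto
    also have "\<dots> \<longleftrightarrow> [b = a] (mod q - 1)"
      using that by (simp add: power_eq_one_iff_dvd cong_altdef_nat)
    finally show ?thesis by (simp add: cong_sym_eq)
  qed
  show ?thesis using *[of a b] *[of b a] by (cases "a \<le> b") (auto simp: cong_sym_eq)
qed

lemma power_half_eq_minus_one:
  assumes "odd q"
  shows "w ^ ((q - 1) div 2) = -1"
proof -
  have q: "q - 1 = 2 * ((q - 1) div 2)" "(q - 1) div 2 > 0" using assms q_ge_2 by (auto elim!: oddE)
  have "(w ^ ((q - 1) div 2))\<^sup>2 = 1"
    using power_eq_one_iff_dvd q(1) by (simp flip: power_mult add: mult.commute)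
  hence "(w ^ ((q - 1) div 2) - 1) * (w ^ ((q - 1) div 2) + 1) = 0"
    by (simp add: algebra_simps power2_eq_square)
  moreover have "w ^ ((q - 1) div 2) \<noteq> 1"
  proof
    assume "w ^ ((q - 1) div 2) = 1"
    hence "q - 1 \<le> (q - 1) div 2" using q(2) by (simp add: power_eq_one_iff_dvd dvd_imp_le)
    thus False using q by linarith
  qed
  ultimately show ?thesis by (simp add: eq_neg_iff_add_eq_0)
qed

lemma square_if_power_half_eq_one:
  fixes z :: 'a
  assumes "odd q" "z \<noteq> 0" "z ^ ((q - 1) div 2) = 1"
  shows "\<exists>y. y\<^sup>2 = z"
proof -
  obtain i where i: "z = w ^ i" using w_generates assms(2) by auto
  have q: "q - 1 = 2 * ((q - 1) div 2)" "(q - 1) div 2 > 0" using assms(1) q_ge_2 by (auto elim!: oddE)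
  have "(q - 1) dvd i * ((q - 1) div 2)"
    using assms(3) i power_eq_one_iff_dvd by (simp flip: power_mult)
  hence "2 * ((q - 1) div 2) dvd i * ((q - 1) div 2)" using q(1) by simp
  hence "2 dvd i" using q(2) by (simp add: mult.commute)
  then obtain j where "i = 2 * j" ..
  hence "(w ^ j)\<^sup>2 = z" using i by (simp flip: power_mult add: mult.commute)
  thus ?thesis by blast
qed

end

lemma prod_linear_factors_eq_binomial:
  fixes S :: "'a::field set"
  assumes "card S = f" "f \<ge> 1" "\<forall>b\<in>S. b ^ f = y"
  shows "(\<Prod>b\<in>S. [:-b, 1:]) = [:0, 1:] ^ f - [:y:]"
proof -
  let ?p = "\<Prod>b\<in>S. [:-b, 1:]" and ?P = "[:0, 1:] ^ f - [:y:] :: 'a poly"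
  have fin: "finite S" using assms(1,2) card.infinite by fastforce
  have "degree ?p = f" using assms(1) by (subst degree_prod_sum_eq) auto
  moreover have "coeff ?p f = 1"
    using lead_coeff_prod[of "\<lambda>b. [:-b, 1:]" S] \<open>degree ?p = f\<close> by simp
  moreover have "degree ([:0, 1:] ^ f :: 'a poly) = f" using degree_linear_power[of 0 f] by simp
  moreover have "coeff ?P f = 1"
    using coeff_linear_power[of "0::'a" f] assms(2) by (cases f) auto
  ultimately have "degree (?p - ?P) \<le> f" "coeff (?p - ?P) f = 0"
    by (auto intro!: degree_diff_le)
  hence "degree (?p - ?P) < card S \<or> ?p - ?P = 0"
    using assms(1) by (metis leading_coeff_0_iff le_neq_implies_less)
  moreover have "\<forall>b\<in>S. poly (?p - ?P) b = 0"
    using assms(3) fin by (auto simp: poly_prod intro: prod_zero)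
  ultimately have "?p - ?P = 0" using poly_eq_0_if_vanishes_on by blast
  thus ?thesis by simp
qed

lemma prod_diff_eq_binomial:
  fixes S :: "'a::field set"
  assumes "card S = f" "f \<ge> 1" "\<forall>b\<in>S. b ^ f = y"
  shows "(\<Prod>b\<in>S. (x - b)) = x ^ f - y"
  using arg_cong[OF prod_linear_factors_eq_binomial[OF assms], of "\<lambda>p. poly p x"]
  by (simp add: poly_prod)

text \<open>The derivative of \<open>x\<^sup>f - y\<close> at one of its roots \<open>a\<close>, computed without derivatives:
  cancel \<open>x - a\<close> from both sides of \<open>prod_linear_factors_eq_binomial\<close>.\<close>

lemma prod_diff_other_roots_eq:
  fixes S :: "'a::field set"
  assumes "card S = f" "f \<ge> 1" "\<forall>b\<in>S. b ^ f = y" and a: "a \<in> S"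
  shows "(\<Prod>b\<in>S-{a}. (a - b)) = of_nat f * a ^ (f - 1)"
proof -
  let ?p = "\<Prod>b\<in>S-{a}. [:-b, 1:]"
  let ?R = "\<Sum>i<f. [:a:] ^ (f - Suc i) * [:0, 1:] ^ i :: 'a poly"
  have fin: "finite S" using assms(1,2) card.infinite by fastforce
  have "[:-a, 1:] * ?p = (\<Prod>b\<in>S. [:-b, 1:])"
    using a fin by (simp add: prod.remove)
  also have "\<dots> = [:0, 1:] ^ f - [:a:] ^ f"
    using assms(3) a by (simp add: prod_linear_factors_eq_binomial[OF assms(1-3)] poly_const_pow)
  also have "\<dots> = ([:0, 1:] - [:a:]) * ?R" by (rule power_diff_sumr2)
  also have "[:0, 1:] - [:a:] = [:-a, 1::'a:]" by simp
  finally have "?p = ?R" by (subst (asm) mult_cancel_left) simp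
  have "(\<Prod>b\<in>S-{a}. (a - b)) = poly ?p a" by (simp add: poly_prod)
  also have "\<dots> = (\<Sum>i<f. a ^ (f - Suc i) * a ^ i)"
    by (simp add: \<open>?p = ?R\<close> poly_sum)
  also have "\<dots> = (\<Sum>i<f. a ^ (f - 1))"
    by (intro sum.cong refl) (simp flip: power_add)
  finally show ?thesis by simp
qed

lemma prod_UN_remove:
  assumes "finite I" "\<forall>i\<in>I. finite (X i)"
    and "\<And>i j. i \<in> I \<Longrightarrow> j \<in> I \<Longrightarrow> i \<noteq> j \<Longrightarrow> X i \<inter> X j = {}" and "i0 \<in> I" "z \<in> X i0"
  shows "(\<Prod>y\<in>(\<Union>i\<in>I. X i) - {z}. F y) = (\<Prod>y\<in>X i0 - {z}. F y) * (\<Prod>i\<in>I-{i0}. \<Prod>y\<in>X i. F y)"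
proof -
  have "(\<Union>i\<in>I. X i) - {z} = (X i0 - {z}) \<union> (\<Union>i\<in>I-{i0}. X i)"
    using assms(3-5) by blast
  moreover have "(X i0 - {z}) \<inter> (\<Union>i\<in>I-{i0}. X i) = {}"
    using assms(3,4) by blast
  ultimately have "(\<Prod>y\<in>(\<Union>i\<in>I. X i) - {z}. F y)
      = (\<Prod>y\<in>X i0 - {z}. F y) * (\<Prod>y\<in>(\<Union>i\<in>I-{i0}. X i). F y)"
    using assms(1,2,4) by (simp add: prod.union_disjoint)
  also have "(\<Prod>y\<in>(\<Union>i\<in>I-{i0}. X i). F y) = (\<Prod>i\<in>I-{i0}. \<Prod>y\<in>X i. F y)"
    using assms(1-3) by (intro prod.UNION_disjoint) auto
  finally show ?thesis .
qed

lemma cong_mult_mult_iff_nat: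
  "0 < (e::nat) \<Longrightarrow> [e * x = e * y] (mod e * f) \<longleftrightarrow> [x = y] (mod f)"
  by (simp add: cong_def mod_mult_mult1)

definition power_coset :: "'a::monoid_mult \<Rightarrow> nat \<Rightarrow> nat \<Rightarrow> nat \<Rightarrow> 'a set" where
  "power_coset w c e f = (\<lambda>j. w ^ (c + e * j)) ` {..<f}"

context primitive_element
begin

lemma card_power_coset:
  assumes "e * f = q - 1"
  shows "card (power_coset w c e f) = f"
proof -
  have "e > 0" using assms q_ge_2 by (cases e) auto
  have "inj_on (\<lambda>j. w ^ (c + e * j)) {..<f}"
  proof
    fix j j' assume "j \<in> {..<f}" "j' \<in> {..<f}" "w ^ (c + e * j) = w ^ (c + e * j')"
    hence "[e * j = e * j'] (mod e * f)"
      using assms by (simp add: power_eq_power_iff cong_add_lcancel_nat)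
    hence "[j = j'] (mod f)" using \<open>e > 0\<close> by (simp add: cong_mult_mult_iff_nat)
    thus "j = j'" using \<open>j \<in> {..<f}\<close> \<open>j' \<in> {..<f}\<close> by (simp add: cong_def)
  qed
  thus ?thesis by (simp add: power_coset_def card_image)
qed

lemma power_coset_power:
  assumes "e * f = q - 1" "b \<in> power_coset w c e f"
  shows "b ^ f = w ^ (c * f)"
proof -
  obtain j where "b = w ^ (c + e * j)" using assms(2) by (auto simp: power_coset_def)
  hence "b ^ f = w ^ (c * f) * (w ^ (e * f)) ^ j"
    by (simp flip: power_mult power_add add: algebra_simps)
  moreover have "w ^ (e * f) = 1" using assms(1) power_eq_one_iff_dvd by simp
  ultimately show ?thesis by simp
qed

lemma prod_diff_power_coset:
  "e * f = q - 1 \<Longrightarrow> f \<ge> 1 \<Longrightarrow> (\<Prod>b\<in>power_coset w c e f. (x - b)) = x ^ f - w ^ (c * f)"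
  by (intro prod_diff_eq_binomial card_power_coset ballI power_coset_power)

lemma prod_diff_power_coset_other:
  "e * f = q - 1 \<Longrightarrow> f \<ge> 1 \<Longrightarrow> a \<in> power_coset w c e f \<Longrightarrow>
    (\<Prod>b\<in>power_coset w c e f - {a}. (a - b)) = of_nat f * a ^ (f - 1)"
  by (rule prod_diff_other_roots_eq[of _ _ "w ^ (c * f)"])
    (auto intro: card_power_coset power_coset_power)

end

section \<open>Fields of order \<open>r\<^sup>2\<close>\<close>

locale odd_square_order =
  fixes r q :: nat
  assumes r_prime_power: "prime_power r" and r_odd: "odd r" and q_eq: "q = r\<^sup>2"
begin

definition "h = (r + 1) div 2"
definition "Q = (q - 1) div 2"

lemma r_ge_3: "r \<ge> 3"
proof -
  obtain p k where "prime p" "k \<ge> 1" "r = p ^ k" using r_prime_power by (auto simp: prime_power_def)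
  hence "r \<ge> 2"
    by (metis One_nat_def le_trans power_one_right power_increasing prime_ge_2_nat
        prime_gt_0_nat Suc_leI)
  thus ?thesis using r_odd by presburger
qed

lemma r_plus_1_eq: "r + 1 = 2 * h"
  using r_odd by (simp add: h_def)

lemma r_minus_1_eq: "r - 1 = 2 * (h - 1)"
  using r_plus_1_eq r_ge_3 by simp

lemma q_minus_1_eq: "q - 1 = (r - 1) * (r + 1)"
  using r_ge_3 by (simp add: q_eq power2_eq_square algebra_simps)

lemma Q_eq: "Q = (r - 1) * h"
  unfolding Q_def q_minus_1_eq r_plus_1_eq by simp

lemma q_minus_1_eq_2Q: "q - 1 = 2 * Q"
  unfolding Q_eq q_minus_1_eq r_plus_1_eq by simp

lemma even_Q: "even Q"
  using r_odd r_ge_3 by (simp add: Q_eq)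

lemma odd_q: "odd q"
  using r_odd by (simp add: q_eq)

end

locale quadratic_field = odd_square_order r q + primitive_element q w
  for r q :: nat and w :: "'a::{field,finite}"
begin

lemma w_power_Q: "w ^ Q = -1"
  unfolding Q_def by (rule power_half_eq_minus_one[OF odd_q])

lemma square_if_power_Q_eq_one: "z \<noteq> 0 \<Longrightarrow> z ^ Q = (1 :: 'a) \<Longrightarrow> \<exists>y. y\<^sup>2 = z"
  unfolding Q_def by (rule square_if_power_half_eq_one[OF odd_q])

lemma power_Q_of_even_power: "even k \<Longrightarrow> (w ^ k) ^ Q = 1"
  using q_minus_1_eq_2Q by (auto simp: power_eq_one_iff_dvd simp flip: power_mult elim!: evenE)

lemma r_power_of_CHAR: "prime CHAR('a) \<and> (\<exists>k>0. r = CHAR('a) ^ k)"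
proof -
  have prime: "prime CHAR('a)"
    by (intro prime_CHAR_semidom finite_imp_CHAR_pos) simp
  obtain p k where pk: "prime p" "k \<ge> 1" "r = p ^ k"
    using r_prime_power by (auto simp: prime_power_def)
  have "CHAR('a) dvd p ^ (k * 2)"
    using CHAR_dvd_CARD[where 'a = 'a] card_UNIV q_eq pk by (simp add: power_mult)
  hence "CHAR('a) dvd p" by (rule prime_dvd_power[OF prime])
  hence "CHAR('a) = p" using prime pk by (intro primes_dvd_imp_eq)
  thus ?thesis using prime pk by (intro conjI exI[of _ k]) auto
qed

lemma frobenius_add: "(x + y :: 'a) ^ r = x ^ r + y ^ r"
proof -
  obtain k where "r = CHAR('a) ^ k" using r_power_of_CHAR by auto
  thus ?thesis using r_power_of_CHAR by (intro freshmans_dream') auto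
qed

lemma frobenius_diff: "(x - y :: 'a) ^ r = x ^ r - y ^ r"
  using frobenius_add[of "x - y" y] by simp

lemma of_nat_power_r: "(of_nat n :: 'a) ^ r = of_nat n"
proof (induction n)
  case 0 thus ?case using r_ge_3 by simp
next
  case (Suc n) thus ?case using frobenius_add[of 1 "of_nat n"] by simp
qed

text \<open>The elements of the subfield of order \<open>r\<close> are squares, since \<open>r - 1\<close> divides \<open>Q\<close>.\<close>

lemma power_Q_eq_one_if_fixed: "z \<noteq> 0 \<Longrightarrow> z ^ r = (z :: 'a) \<Longrightarrow> z ^ Q = 1"
proof -
  assume "z \<noteq> 0" "z ^ r = z"
  moreover have "z ^ r = z ^ (r - 1) * z" using r_ge_3 by (simp flip: power_Suc2)
  ultimately have "z ^ (r - 1) = 1" by simp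
  thus "z ^ Q = 1" unfolding Q_eq by (simp add: power_mult)
qed

lemma power_Q_diff_fixed:
  "x \<noteq> y \<Longrightarrow> x ^ r = x \<Longrightarrow> y ^ r = (y :: 'a) \<Longrightarrow> (x - y) ^ Q = 1"
  by (intro power_Q_eq_one_if_fixed) (simp_all add: frobenius_diff)

lemma of_nat_nonzero_if_dvd: "f dvd q - 1 \<Longrightarrow> (of_nat f :: 'a) \<noteq> 0"
proof
  assume "f dvd q - 1" "(of_nat f :: 'a) = 0"
  hence "CHAR('a) dvd q - 1" using dvd_trans of_nat_eq_0_iff_char_dvd by blast
  moreover have "CHAR('a) dvd q"
  proof -
    obtain k where "k > 0" "r = CHAR('a) ^ k" using r_power_of_CHAR by auto
    hence "CHAR('a) dvd r" by (simp add: dvd_power)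
    thus ?thesis by (simp add: q_eq power2_eq_square)
  qed
  moreover have "q - 1 + 1 = q" using r_ge_3 by (simp add: q_eq)
  ultimately have "CHAR('a) dvd 1" by (metis dvd_add_right_iff)
  thus False using r_power_of_CHAR by simp
qed

lemma power_Q_of_nat: "f dvd q - 1 \<Longrightarrow> (of_nat f :: 'a) ^ Q = 1"
  by (intro power_Q_eq_one_if_fixed of_nat_nonzero_if_dvd of_nat_power_r)

text \<open>For \<open>x\<^sup>r\<^sup>+\<^sup>1 = 1\<close> we have \<open>x\<^sup>r = x\<^sup>-\<^sup>1\<close>, so \<open>(x - y)\<^sup>r\<^sup>-\<^sup>1 = -1/(xy)\<close>;
  raising to the power \<open>h\<close> gives the value of the quadratic character of \<open>x - y\<close>.\<close>

lemma power_Q_diff_norm_one: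
  assumes x: "x ^ (r + 1) = 1" and y: "y ^ (r + 1) = (1::'a)" and xy: "x \<noteq> y"
  shows "(x - y) ^ Q = (-1) ^ h * (x * y) ^ h"
proof -
  have "x ^ r * x = 1" "y ^ r * y = 1" using x y by (simp_all flip: power_Suc2)
  hence "(x - y) ^ r * (x * y) = - (x - y)" by (simp add: frobenius_diff algebra_simps)
  hence "(x - y) ^ (r - 1) * (x - y) * (x * y) = - (x - y)"
    using r_ge_3 by (simp flip: power_Suc2)
  hence "(x - y) * ((x - y) ^ (r - 1) * (x * y)) = (x - y) * (-1)" by (simp add: algebra_simps)
  hence "(x - y) ^ (r - 1) * (x * y) = -1" using xy by (subst (asm) mult_cancel_left) simp
  hence "((x - y) ^ (r - 1) * (x * y)) ^ h = (-1) ^ h" by simp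
  hence B: "(x - y) ^ Q * (x * y) ^ h = (-1) ^ h"
    unfolding Q_eq by (simp add: power_mult_distrib power_mult)
  have "(x * y) ^ h * (x * y) ^ h = (x * y) ^ (r + 1)"
    by (simp only: r_plus_1_eq mult_2 power_add)
  also have "\<dots> = x ^ (r + 1) * y ^ (r + 1)" by (rule power_mult_distrib)
  also have "\<dots> = 1" using x y by simp
  finally have "(x - y) ^ Q = (x - y) ^ Q * ((x * y) ^ h * (x * y) ^ h)" by simp
  also have "\<dots> = (-1) ^ h * (x * y) ^ h" using B by (simp add: mult.assoc[symmetric])
  finally show ?thesis .
qed

lemma power_Q_diff_of_power_h:
  assumes "x ^ h = a" "y ^ h = b" "a\<^sup>2 = 1" "b\<^sup>2 = 1" "x \<noteq> (y::'a)"
  shows "(x - y) ^ Q = (-1) ^ h * a * b"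
proof -
  have "z ^ (r + 1) = (z ^ h)\<^sup>2" for z :: 'a
    unfolding r_plus_1_eq by (simp add: power_mult mult.commute)
  hence "x ^ (r + 1) = 1" "y ^ (r + 1) = 1" using assms(1-4) by simp_all
  from power_Q_diff_norm_one[OF this assms(5)] show ?thesis
    using assms(1,2) by (simp add: power_mult_distrib mult.assoc)
qed

lemma power_fixed_if_dvd: "q - 1 dvd a * (r - 1) \<Longrightarrow> (w ^ a) ^ r = w ^ a"
proof -
  assume "q - 1 dvd a * (r - 1)"
  moreover have "a * r - a = a * (r - 1)" by (simp add: diff_mult_distrib2)
  ultimately have "[a * r = a] (mod q - 1)" using r_ge_3 by (subst cong_altdef_nat) auto
  thus ?thesis by (simp add: power_eq_power_iff flip: power_mult)
qed

end

section \<open>The evaluation set\<close>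

locale coset_parameters = odd_square_order r q for r q :: nat +
  fixes e1 f1 e2 f2 l s t :: nat
  assumes pos: "e1 > 0" "f1 > 0" "e2 > 0" "f2 > 0"
    and fac1: "q - 1 = e1 * f1" and fac2: "q - 1 = e2 * f2"
    and l_ge_2: "l \<ge> 2"
    and e1_mod: "e1 mod 2 ^ (l + 1) = 2 ^ l"
    and pow2_dvd_e2: "2 ^ l dvd e2"
    and dvd1: "2 * e2 dvd e1 * (r + 1)"
    and dvd2: "e1 dvd e2 * (r - 1)"
    and s_range: "1 \<le> s" "s \<le> e1 div gcd e1 e2"
    and t_range: "1 \<le> t" "t \<le> e2 div gcd e1 e2"
begin

definition "g = gcd e1 e2"
definition "m = e1 div 2"
definition "D1 = e1 div g"
definition "D2 = e2 div g"
definition "T = e1 * (r + 1) div (2 * e2)"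

lemma g_pos: "g > 0"
  using pos by (simp add: g_def)

lemma g_dvd: "g dvd e1" "g dvd e2" "g dvd q - 1"
  unfolding fac1 g_def by simp_all

lemma D1_g: "D1 * g = e1" and D2_g: "D2 * g = e2"
  by (simp_all add: D1_def D2_def g_def)

lemma s_le_D1: "s \<le> D1" and t_le_D2: "t \<le> D2"
  using s_range t_range by (simp_all add: D1_def D2_def g_def)

lemma pow2_dvd_e1: "2 ^ l dvd e1" and not_pow2_Suc_dvd_e1: "\<not> 2 ^ (l + 1) dvd e1"
proof -
  have "e1 = 2 ^ (l + 1) * (e1 div 2 ^ (l + 1)) + 2 ^ l"
    using e1_mod by (metis div_mult_mod_eq mult.commute)
  moreover have "2 ^ l dvd 2 ^ (l + 1) * (e1 div 2 ^ (l + 1)) + (2::nat) ^ l"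
    by (intro dvd_add) (auto simp: power_add)
  ultimately show "2 ^ l dvd e1" by simp
  show "\<not> 2 ^ (l + 1) dvd e1"
  proof
    assume "2 ^ (l + 1) dvd e1"
    hence "e1 mod 2 ^ (l + 1) = 0" by simp
    thus False using e1_mod by simp
  qed
qed

lemma four_dvd_pow2: "4 dvd (2::nat) ^ l"
  using le_imp_power_dvd[OF l_ge_2, of "2::nat"] by simp

lemma two_m: "2 * m = e1" and even_m: "even m"
proof -
  obtain u where "e1 = 4 * u" using dvd_trans[OF four_dvd_pow2 pow2_dvd_e1] ..
  thus "2 * m = e1" "even m" unfolding m_def by auto
qed

lemma pow2_dvd_g: "2 ^ l dvd g"
  unfolding g_def using pow2_dvd_e1 pow2_dvd_e2 by simp

lemma even_g: "even g" and even_e2: "even e2"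
proof -
  have "2 dvd (2::nat) ^ l" using l_ge_2 by simp
  thus "even g" "even e2" using dvd_trans[OF _ pow2_dvd_g] dvd_trans[OF _ pow2_dvd_e2] by blast+
qed

text \<open>This is where the hypothesis on the 2-adic valuations enters: \<open>m\<close> separates the two
  families of cosets.\<close>

lemma not_g_dvd_m: "\<not> g dvd m"
proof
  assume "g dvd m"
  hence "2 ^ l dvd m" using pow2_dvd_g by (rule dvd_trans[rotated])
  hence "2 ^ (l + 1) dvd 2 * m" by (simp add: power_add mult.commute)
  thus False using not_pow2_Suc_dvd_e1 two_m by simp
qed

lemma odd_D1: "odd D1"
proof
  assume "even D1"
  hence "2 * 2 ^ l dvd D1 * g" using pow2_dvd_g by (intro mult_dvd_mono) auto
  hence "2 ^ (l + 1) dvd e1" using D1_g by (simp add: mult.commute)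
  thus False using not_pow2_Suc_dvd_e1 by simp
qed

lemma coprime_D1_D2: "coprime D1 D2"
  unfolding D1_def D2_def g_def using pos by (intro div_gcd_coprime) auto

lemma D1_dvd_r_minus_1: "D1 dvd r - 1"
proof -
  have "D1 * g dvd (D2 * g) * (r - 1)" unfolding D1_g D2_g by (rule dvd2)
  hence "D1 * g dvd (D2 * (r - 1)) * g" by (simp only: mult_ac)
  hence "D1 dvd D2 * (r - 1)" using g_pos by simp
  thus ?thesis using coprime_D1_D2 by (simp add: coprime_dvd_mult_right_iff)
qed

lemma D2_dvd_h: "D2 dvd h"
proof -
  have "2 * (D2 * g) dvd (D1 * g) * (r + 1)" unfolding D1_g D2_g by (rule dvd1)
  hence "(2 * D2) * g dvd (D1 * (r + 1)) * g" by (simp only: mult_ac)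
  hence "2 * D2 dvd D1 * (r + 1)" using g_pos by simp
  moreover have "coprime (2 * D2) D1" using coprime_D1_D2 odd_D1 by (simp add: coprime_commute)
  ultimately have "2 * D2 dvd r + 1"
    using coprime_dvd_mult_left_iff[of "2 * D2" D1 "r + 1"] by (simp add: mult.commute)
  thus ?thesis unfolding r_plus_1_eq by simp
qed

lemma T_eq: "2 * e2 * T = e1 * (r + 1)"
  using dvd1 by (simp add: T_def)

lemma dvd_g_f1_r_minus_1: "q - 1 dvd g * f1 * (r - 1)"
proof -
  obtain u where "r - 1 = D1 * u" using D1_dvd_r_minus_1 ..
  hence "g * f1 * (r - 1) = (D1 * g) * f1 * u" by (simp add: mult_ac)
  hence "g * f1 * (r - 1) = (q - 1) * u" unfolding D1_g fac1 .
  thus ?thesis by simp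
qed

lemma dvd_g_f2_h: "q - 1 dvd g * f2 * h"
proof -
  obtain u where "h = D2 * u" using D2_dvd_h ..
  hence "g * f2 * h = (D2 * g) * f2 * u" by (simp add: mult_ac)
  hence "g * f2 * h = (q - 1) * u" unfolding D2_g fac2 .
  thus ?thesis by simp
qed

lemma dvd_e2_f1_r_minus_1: "q - 1 dvd e2 * f1 * (r - 1)"
proof -
  obtain u where "e2 * (r - 1) = e1 * u" using dvd2 by auto
  hence "e2 * f1 * (r - 1) = (q - 1) * u" using fac1 by (metis mult.assoc mult.commute)
  thus ?thesis by simp
qed

lemma dvd_Q_r_minus_1: "q - 1 dvd Q * (r - 1)"
proof -
  have "Q * (r - 1) = (q - 1) * (h - 1)"
    unfolding r_minus_1_eq q_minus_1_eq_2Q by simp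
  thus ?thesis by simp
qed

lemma e1_f2_h_eq: "e1 * f2 * h = T * (q - 1)"
proof -
  have "(e1 * f2 * h) * (2 * e2) = e1 * (r + 1) * (e2 * f2)" using r_plus_1_eq by (simp add: mult_ac)
  also have "\<dots> = (T * (q - 1)) * (2 * e2)" using T_eq fac2 by (simp add: mult_ac)
  finally show ?thesis using pos by simp
qed

lemma m_f2_h_eq: "m * f2 * h = Q * T"
proof -
  have "2 * (m * f2 * h) = (2 * m) * f2 * h" by (simp only: mult.assoc)
  also have "\<dots> = T * (q - 1)" by (simp only: two_m e1_f2_h_eq)
  also have "\<dots> = 2 * (Q * T)" unfolding q_minus_1_eq_2Q by simp
  finally show ?thesis by simp
qed

lemma m_f1_eq: "m * f1 = Q"
proof -
  have "2 * (m * f1) = (2 * m) * f1" by (simp only: mult.assoc)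
  also have "\<dots> = 2 * Q" by (simp only: two_m fac1[symmetric] q_minus_1_eq_2Q)
  finally show ?thesis by simp
qed

lemma T_mult: "t * e1 * (r + 1) div (2 * e2) = t * T"
proof -
  have "t * e1 * (r + 1) = t * (e1 * (r + 1))" by (simp only: mult.assoc)
  also have "\<dots> = (t * T) * (2 * e2)" by (simp only: T_eq[symmetric] mult_ac)
  finally show ?thesis using pos by simp
qed

lemma h_mult: "(r + 1) div 2 = h" "t * (r + 1) div 2 = t * h" "(t - 1) * (r + 1) div 2 = (t - 1) * h"
  using r_plus_1_eq by simp_all

end

locale coset_construction = coset_parameters r q e1 f1 e2 f2 l s t + quadratic_field r q w
  for r q e1 f1 e2 f2 l s t :: nat and w :: "'a::{field,finite}"
begin

definition "coset1 i = power_coset w (g * i) e1 f1"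
definition "coset2 i = power_coset w (m + g * i) e2 f2"
definition "A1 = (\<Union>i<s. coset1 i)"
definition "A2 = (\<Union>i<t. coset2 i)"
definition "A = A1 \<union> A2"

definition "eta z = (\<Prod>y\<in>A-{z}. (z - y))"

lemma e1_f1: "e1 * f1 = q - 1" and e2_f2: "e2 * f2 = q - 1"
  using fac1 fac2 by simp_all

lemma not_cong_m_shift:
  assumes "g dvd x" "g dvd y" "g dvd M"
  shows "\<not> [x = m + y] (mod M)"
proof
  assume "[x = m + y] (mod M)"
  hence "[x = m + y] (mod g)" using assms(3) by (rule cong_dvd_modulus_nat)
  moreover have "x mod g = 0" "(m + y) mod g = m mod g" using assms(1,2) by (auto elim!: dvdE)
  ultimately have "m mod g = 0" by (simp add: cong_def)
  thus False using not_g_dvd_m by (simp add: mod_eq_0_iff_dvd)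
qed

lemma power_coset1_eq_imp_eq:
  assumes "i < s" "i' < s" "w ^ (g * i * f1) = w ^ (g * i' * f1)"
  shows "i = i'"
proof -
  have "(g * f1) * D1 = (D1 * g) * f1" by (simp only: mult_ac)
  hence "q - 1 = (g * f1) * D1" by (simp only: D1_g e1_f1)
  hence "[(g * f1) * i = (g * f1) * i'] (mod (g * f1) * D1)"
    using assms(3) by (simp add: power_eq_power_iff mult_ac)
  hence "[i = i'] (mod D1)" using g_pos pos by (simp add: cong_mult_mult_iff_nat)
  thus ?thesis using assms s_le_D1 by (simp add: cong_def)
qed

lemma power_coset2_eq_imp_eq:
  assumes "i < t" "i' < t" "w ^ ((m + g * i) * f2) = w ^ ((m + g * i') * f2)"
  shows "i = i'"
proof -
  have "(g * f2) * D2 = (D2 * g) * f2" by (simp only: mult_ac)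
  hence "q - 1 = (g * f2) * D2" by (simp only: D2_g e2_f2)
  hence "[m * f2 + (g * f2) * i = m * f2 + (g * f2) * i'] (mod (g * f2) * D2)"
    using assms(3) by (simp add: power_eq_power_iff algebra_simps)
  hence "[i = i'] (mod D2)"
    using g_pos pos by (simp add: cong_add_lcancel_nat cong_mult_mult_iff_nat)
  thus ?thesis using assms t_le_D2 by (simp add: cong_def)
qed

lemma power_coset1_ne_coset2: "w ^ (g * i + e1 * j) \<noteq> w ^ (m + g * i' + e2 * j')"
  using not_cong_m_shift[of "g * i + e1 * j" "g * i' + e2 * j'" "q - 1"] g_dvd
  by (simp add: power_eq_power_iff add.assoc)

lemma power_f2_coset1_ne_coset2: "w ^ ((g * i0 + e1 * j) * f2) \<noteq> w ^ ((m + g * i) * f2)"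
proof
  assume "w ^ ((g * i0 + e1 * j) * f2) = w ^ ((m + g * i) * f2)"
  hence "[f2 * (g * i0 + e1 * j) = f2 * (m + g * i)] (mod f2 * e2)"
    using e2_f2 by (simp add: power_eq_power_iff mult_ac)
  hence "[g * i0 + e1 * j = m + g * i] (mod e2)" using pos by (simp add: cong_mult_mult_iff_nat)
  thus False using not_cong_m_shift g_dvd by simp
qed

lemma power_f1_coset2_ne_coset1: "w ^ ((m + g * i0 + e2 * j) * f1) \<noteq> w ^ (g * i * f1)"
proof
  assume "w ^ ((m + g * i0 + e2 * j) * f1) = w ^ (g * i * f1)"
  hence "[f1 * (g * i) = f1 * (m + (g * i0 + e2 * j))] (mod f1 * e1)"
    using e1_f1 by (simp add: power_eq_power_iff mult_ac cong_sym_eq add.assoc)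
  hence "[g * i = m + (g * i0 + e2 * j)] (mod e1)" using pos by (simp add: cong_mult_mult_iff_nat)
  thus False using not_cong_m_shift g_dvd by simp
qed

lemma card_coset1: "card (coset1 i) = f1" and card_coset2: "card (coset2 i) = f2"
  unfolding coset1_def coset2_def using card_power_coset e1_f1 e2_f2 by simp_all

lemma finite_coset1: "finite (coset1 i)" and finite_coset2: "finite (coset2 i)"
  by (simp_all add: coset1_def coset2_def power_coset_def)

lemma coset1_power: "b \<in> coset1 i \<Longrightarrow> b ^ f1 = w ^ (g * i * f1)"
  and coset2_power: "b \<in> coset2 i \<Longrightarrow> b ^ f2 = w ^ ((m + g * i) * f2)"
  unfolding coset1_def coset2_def using power_coset_power e1_f1 e2_f2 by blast+

lemma prod_diff_coset1: "(\<Prod>y\<in>coset1 i. (x - y)) = x ^ f1 - w ^ (g * i * f1)"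
  and prod_diff_coset2: "(\<Prod>y\<in>coset2 i. (x - y)) = x ^ f2 - w ^ ((m + g * i) * f2)"
  unfolding coset1_def coset2_def using prod_diff_power_coset e1_f1 e2_f2 pos by simp_all

lemma disjoint_coset1:
  assumes "i < s" "i' < s" "i \<noteq> i'"
  shows "coset1 i \<inter> coset1 i' = {}"
proof (rule equals0I)
  fix b assume "b \<in> coset1 i \<inter> coset1 i'"
  hence "w ^ (g * i * f1) = w ^ (g * i' * f1)" using coset1_power by (metis IntD1 IntD2)
  thus False using power_coset1_eq_imp_eq assms by blast
qed

lemma disjoint_coset2:
  assumes "i < t" "i' < t" "i \<noteq> i'"
  shows "coset2 i \<inter> coset2 i' = {}"
proof (rule equals0I)
  fix b assume "b \<in> coset2 i \<inter> coset2 i'"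
  hence "w ^ ((m + g * i) * f2) = w ^ ((m + g * i') * f2)" using coset2_power by (metis IntD1 IntD2)
  thus False using power_coset2_eq_imp_eq assms by blast
qed

lemma disjoint_A1_A2: "A1 \<inter> A2 = {}"
  using power_coset1_ne_coset2 not_sym[OF power_coset1_ne_coset2]
  by (auto simp: A1_def A2_def coset1_def coset2_def power_coset_def)

lemma card_A: "card A = s * f1 + t * f2"
proof -
  have "card A1 = (\<Sum>i<s. card (coset1 i))"
    unfolding A1_def by (rule card_UN_disjoint) (auto simp: finite_coset1 disjoint_coset1)
  moreover have "card A2 = (\<Sum>i<t. card (coset2 i))"
    unfolding A2_def by (rule card_UN_disjoint) (auto simp: finite_coset2 disjoint_coset2)
  ultimately show ?thesis
    using card_Un_disjoint[OF _ _ disjoint_A1_A2] by (simp add: A_def card_coset1 card_coset2)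
qed

lemma A_even_power:
  assumes "z \<in> A"
  obtains k where "even k" "z = w ^ k"
proof -
  have "even e1" using two_m by (metis dvd_triv_left)
  from assms consider i j where "z = w ^ (g * i + e1 * j)" | i j where "z = w ^ (m + g * i + e2 * j)"
    by (auto simp: A_def A1_def A2_def coset1_def coset2_def power_coset_def)
  thus ?thesis
  proof cases
    case (1 i j)
    thus ?thesis using even_g \<open>even e1\<close> by (intro that[of "g * i + e1 * j"]) auto
  next
    case (2 i j)
    thus ?thesis using even_g even_m even_e2 by (intro that[of "m + g * i + e2 * j"]) auto
  qed
qed

lemma nonzero_if_in_A: "z \<in> A \<Longrightarrow> z \<noteq> 0"
  using w_nonzero by (auto elim: A_even_power)

lemma power_Q_power_of_A: "z \<in> A \<Longrightarrow> (z ^ n) ^ Q = 1"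
proof -
  assume "z \<in> A"
  then obtain k where "even k" "z = w ^ k" by (rule A_even_power)
  thus ?thesis using power_Q_of_even_power[of "k * n"] by (simp add: power_mult)
qed

lemma prod_diff_coset1_other: "z \<in> coset1 i \<Longrightarrow> (\<Prod>y\<in>coset1 i - {z}. (z - y)) = of_nat f1 * z ^ (f1 - 1)"
  and prod_diff_coset2_other: "z \<in> coset2 i \<Longrightarrow> (\<Prod>y\<in>coset2 i - {z}. (z - y)) = of_nat f2 * z ^ (f2 - 1)"
  unfolding coset1_def coset2_def using prod_diff_power_coset_other e1_f1 e2_f2 pos by simp_all

lemma power_Q_of_nat_mult_power: "z \<in> A \<Longrightarrow> f dvd q - 1 \<Longrightarrow> (of_nat f * z ^ n) ^ Q = 1"
  by (simp add: power_mult_distrib power_Q_of_nat power_Q_power_of_A)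

lemma power_coset1_fixed: "(w ^ (g * i * f1)) ^ r = w ^ (g * i * f1)"
proof (rule power_fixed_if_dvd)
  have "q - 1 dvd (g * f1 * (r - 1)) * i" by (rule dvd_mult2[OF dvd_g_f1_r_minus_1])
  thus "q - 1 dvd g * i * f1 * (r - 1)" by (simp only: mult_ac)
qed

lemma power_coset2_power_h: "(w ^ ((m + g * i) * f2)) ^ h = (-1) ^ T"
proof -
  have "(m + g * i) * f2 * h = Q * T + (g * f2 * h) * i"
    using m_f2_h_eq by (simp add: algebra_simps)
  hence "(w ^ ((m + g * i) * f2)) ^ h = (w ^ Q) ^ T * (w ^ (g * f2 * h)) ^ i"
    by (simp flip: power_mult power_add)
  also have "w ^ (g * f2 * h) = 1" using dvd_g_f2_h power_eq_one_iff_dvd by simp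
  finally show ?thesis using w_power_Q by simp
qed

lemma power_Q_coset1_coset1:
  assumes "z \<in> coset1 i0" "i0 < s" "i < s" "i \<noteq> i0"
  shows "(z ^ f1 - w ^ (g * i * f1)) ^ Q = 1"
proof -
  have "w ^ (g * i0 * f1) \<noteq> w ^ (g * i * f1)" using power_coset1_eq_imp_eq assms(2-4) by blast
  thus ?thesis
    using coset1_power[OF assms(1)] power_coset1_fixed by (simp add: power_Q_diff_fixed)
qed

lemma power_Q_coset1_coset2:
  assumes "z \<in> coset1 i0"
  shows "(z ^ f2 - w ^ ((m + g * i) * f2)) ^ Q = (-1) ^ h * (-1) ^ T"
proof -
  obtain j where z: "z = w ^ (g * i0 + e1 * j)"
    using assms by (auto simp: coset1_def power_coset_def)
  have "(g * i0 + e1 * j) * f2 * h = (g * f2 * h) * i0 + (e1 * f2 * h) * j"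
    by (simp add: algebra_simps)
  also have "\<dots> = (g * f2 * h) * i0 + (q - 1) * (T * j)"
    unfolding e1_f2_h_eq by (simp add: mult_ac)
  finally have "q - 1 dvd (g * i0 + e1 * j) * f2 * h" using dvd_g_f2_h by simp
  hence "(z ^ f2) ^ h = 1" unfolding z by (simp add: power_eq_one_iff_dvd flip: power_mult)
  from power_Q_diff_of_power_h[OF this power_coset2_power_h]
  show ?thesis
    using power_f2_coset1_ne_coset2 by (simp add: z power_mult_distrib flip: power_mult)
qed

lemma power_Q_coset2_coset2:
  assumes "z \<in> coset2 i0" "i0 < t" "i < t" "i \<noteq> i0"
  shows "(z ^ f2 - w ^ ((m + g * i) * f2)) ^ Q = (-1) ^ h"
proof -
  have "w ^ ((m + g * i0) * f2) \<noteq> w ^ ((m + g * i) * f2)"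
    using power_coset2_eq_imp_eq assms(2-4) by blast
  hence "(z ^ f2 - w ^ ((m + g * i) * f2)) ^ Q = (-1) ^ h * (-1) ^ T * (-1) ^ T"
    unfolding coset2_power[OF assms(1)]
    by (intro power_Q_diff_of_power_h power_coset2_power_h) (simp_all flip: power_mult)
  moreover have "(-1::'a) ^ T * (-1) ^ T = 1" by (cases "even T") auto
  ultimately show ?thesis by (simp add: mult.assoc)
qed

lemma power_Q_coset2_coset1:
  assumes "z \<in> coset2 i0"
  shows "(z ^ f1 - w ^ (g * i * f1)) ^ Q = 1"
proof -
  obtain j where z: "z = w ^ (m + g * i0 + e2 * j)"
    using assms by (auto simp: coset2_def power_coset_def)
  have "(m + g * i0 + e2 * j) * f1 * (r - 1)
      = Q * (r - 1) + (g * f1 * (r - 1)) * i0 + (e2 * f1 * (r - 1)) * j"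
    using m_f1_eq by (simp add: algebra_simps)
  hence "q - 1 dvd (m + g * i0 + e2 * j) * f1 * (r - 1)"
    using dvd_g_f1_r_minus_1 dvd_e2_f1_r_minus_1 dvd_Q_r_minus_1 by simp
  hence "(w ^ ((m + g * i0 + e2 * j) * f1)) ^ r = w ^ ((m + g * i0 + e2 * j) * f1)"
    by (rule power_fixed_if_dvd)
  hence "(z ^ f1) ^ r = z ^ f1" by (simp add: z power_mult)
  thus ?thesis
    using power_f1_coset2_ne_coset1 power_coset1_fixed
    by (intro power_Q_diff_fixed) (simp_all add: z flip: power_mult)
qed

lemma prod_diff_A1_remove:
  assumes "i0 < s" "z \<in> coset1 i0"
  shows "(\<Prod>y\<in>A1 - {z}. (z - y))
    = of_nat f1 * z ^ (f1 - 1) * (\<Prod>i\<in>{..<s}-{i0}. (z ^ f1 - w ^ (g * i * f1)))"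
  unfolding A1_def
  using prod_UN_remove[of "{..<s}" coset1 i0 z "\<lambda>y. z - y"] assms disjoint_coset1
  by (simp add: prod_diff_coset1_other prod_diff_coset1)

lemma prod_diff_A2_remove:
  assumes "i0 < t" "z \<in> coset2 i0"
  shows "(\<Prod>y\<in>A2 - {z}. (z - y))
    = of_nat f2 * z ^ (f2 - 1) * (\<Prod>i\<in>{..<t}-{i0}. (z ^ f2 - w ^ ((m + g * i) * f2)))"
  unfolding A2_def
  using prod_UN_remove[of "{..<t}" coset2 i0 z "\<lambda>y. z - y"] assms disjoint_coset2
  by (simp add: prod_diff_coset2_other prod_diff_coset2)

lemma prod_diff_A1: "(\<Prod>y\<in>A1. (x - y)) = (\<Prod>i<s. (x ^ f1 - w ^ (g * i * f1)))"
  unfolding A1_def using disjoint_coset1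
  by (subst prod.UNION_disjoint) (auto simp: prod_diff_coset1)

lemma prod_diff_A2: "(\<Prod>y\<in>A2. (x - y)) = (\<Prod>i<t. (x ^ f2 - w ^ ((m + g * i) * f2)))"
  unfolding A2_def using disjoint_coset2
  by (subst prod.UNION_disjoint) (auto simp: prod_diff_coset2)

lemma eta_split:
  "z \<in> A1 \<Longrightarrow> eta z = (\<Prod>y\<in>A1 - {z}. (z - y)) * (\<Prod>y\<in>A2. (z - y))"
  "z \<in> A2 \<Longrightarrow> eta z = (\<Prod>y\<in>A2 - {z}. (z - y)) * (\<Prod>y\<in>A1. (z - y))"
proof -
  assume "z \<in> A1"
  hence "A - {z} = (A1 - {z}) \<union> A2" "(A1 - {z}) \<inter> A2 = {}"
    using disjoint_A1_A2 by (auto simp: A_def)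
  thus "eta z = (\<Prod>y\<in>A1 - {z}. (z - y)) * (\<Prod>y\<in>A2. (z - y))"
    unfolding eta_def by (simp add: prod.union_disjoint)
next
  assume "z \<in> A2"
  hence "A - {z} = (A2 - {z}) \<union> A1" "(A2 - {z}) \<inter> A1 = {}"
    using disjoint_A1_A2 by (auto simp: A_def)
  thus "eta z = (\<Prod>y\<in>A2 - {z}. (z - y)) * (\<Prod>y\<in>A1. (z - y))"
    unfolding eta_def by (simp add: prod.union_disjoint)
qed

lemma eta_power_Q_coset1:
  assumes "i0 < s" "z \<in> coset1 i0"
  shows "eta z ^ Q = ((-1) ^ h * (-1) ^ T) ^ t"
proof -
  have z: "z \<in> A1" "z \<in> A" using assms by (auto simp: A_def A1_def)
  have "eta z ^ Q = (of_nat f1 * z ^ (f1 - 1)) ^ Q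
      * (\<Prod>i\<in>{..<s}-{i0}. (z ^ f1 - w ^ (g * i * f1)) ^ Q)
      * (\<Prod>i<t. (z ^ f2 - w ^ ((m + g * i) * f2)) ^ Q)"
    by (simp add: eta_split(1)[OF z(1)] prod_diff_A1_remove[OF assms] prod_diff_A2
        power_mult_distrib prod_power_distrib)
  also have "\<dots> = ((-1) ^ h * (-1) ^ T) ^ t"
    using assms z(2) fac1
    by (simp add: power_Q_of_nat_mult_power power_Q_coset1_coset1 power_Q_coset1_coset2)
  finally show ?thesis .
qed

lemma eta_power_Q_coset2:
  assumes "i0 < t" "z \<in> coset2 i0"
  shows "eta z ^ Q = ((-1) ^ h) ^ (t - 1)"
proof -
  have z: "z \<in> A2" "z \<in> A" using assms by (auto simp: A_def A2_def)
  have "eta z ^ Q = (of_nat f2 * z ^ (f2 - 1)) ^ Q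
      * (\<Prod>i\<in>{..<t}-{i0}. (z ^ f2 - w ^ ((m + g * i) * f2)) ^ Q)
      * (\<Prod>i<s. (z ^ f1 - w ^ (g * i * f1)) ^ Q)"
    by (simp add: eta_split(2)[OF z(1)] prod_diff_A2_remove[OF assms] prod_diff_A1
        power_mult_distrib prod_power_distrib)
  also have "\<dots> = ((-1) ^ h) ^ (t - 1)"
    using assms z(2) fac2
    by (simp add: power_Q_of_nat_mult_power power_Q_coset2_coset2 power_Q_coset2_coset1)
  finally show ?thesis .
qed

lemma eta_power_Q:
  assumes "z \<in> A"
  shows "eta z ^ Q = (-1) ^ ((h + T) * t) \<or> eta z ^ Q = (-1) ^ (h * (t - 1))"
  using assms eta_power_Q_coset1 eta_power_Q_coset2
  by (auto simp: A_def A1_def A2_def power_add power_mult)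

lemma eta_nonzero: "z \<in> A \<Longrightarrow> eta z \<noteq> 0"
  by (simp add: eta_def prod_zero_iff)

lemma eta_power_Q_eq_one:
  assumes "even (t * T + t * h)" "even ((t - 1) * h)" "z \<in> A"
  shows "eta z ^ Q = 1"
proof -
  have "even ((h + T) * t)" "even (h * (t - 1))" using assms(1,2) by (simp_all add: algebra_simps)
  thus ?thesis using eta_power_Q[OF assms(3)] by auto
qed

lemma card_A_pos: "card A > 0"
  using card_A s_range t_range pos by simp

lemma MDS_self_dual_code_A:
  assumes "even (t * T + h)" "even (s * f1 + t * f2)"
  shows "\<exists>C :: (nat \<Rightarrow> 'a) set. MDS_self_dual_code (s * f1 + t * f2) C"
proof -
  have "even ((h + T) * t) = even (h * (t - 1))"
    using assms(1) t_range by (auto simp: even_add even_mult_iff even_diff_nat)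
  hence eta: "eta z ^ Q = (-1) ^ (h * (t - 1))" if "z \<in> A" for z
    using eta_power_Q[OF that] by (auto simp: minus_one_power_iff)
  text \<open>\<open>w\<close> is a non-square, so multiplying by it flips the quadratic character.\<close>
  define c where "c = (if (-1::'a) ^ (h * (t - 1)) = 1 then 1 else w)"
  have "c \<noteq> 0" using w_nonzero by (simp add: c_def)
  have "\<exists>y. y\<^sup>2 = c * eta z" if "z \<in> A" for z
  proof (rule square_if_power_Q_eq_one)
    show "c * eta z \<noteq> 0" using \<open>c \<noteq> 0\<close> eta_nonzero[OF that] by simp
    show "(c * eta z) ^ Q = 1"
      using eta[OF that] w_power_Q
      by (auto simp: c_def power_mult_distrib minus_one_power_iff split: if_splits)
  qed
  hence "\<exists>C :: (nat \<Rightarrow> 'a) set. MDS_self_dual_code (card A) C"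
    using \<open>c \<noteq> 0\<close> card_A card_A_pos assms(2)
    by (intro MDS_self_dual_code_of_squares) (auto simp: eta_def)
  thus ?thesis by (simp add: card_A)
qed

lemma MDS_self_dual_code_A_extended:
  assumes "even (t * T + t * h)" "even ((t - 1) * h)" "odd (s * f1 + t * f2)"
  shows "\<exists>C :: (nat \<Rightarrow> 'a) set. MDS_self_dual_code (s * f1 + t * f2 + 1) C"
proof -
  have "\<exists>y. y\<^sup>2 = - eta z" if "z \<in> A" for z
    using eta_power_Q_eq_one[OF assms(1,2) that] eta_nonzero[OF that] even_Q
    by (intro square_if_power_Q_eq_one) (simp_all add: power_minus')
  thus ?thesis
    using MDS_self_dual_code_extended_of_squares[of A] card_A assms(3) by (auto simp: eta_def)
qed

text \<open>Adding \<open>0\<close> to \<open>A\<close> multiplies each \<open>eta z\<close> by \<open>z\<close>, a square, and contributes the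
  node \<open>0\<close> itself, whose product \<open>\<Prod>y\<in>A. -y\<close> is a product of squares.\<close>

lemma MDS_self_dual_code_A_zero:
  assumes "even (t * T + t * h)" "even ((t - 1) * h)" "even (s * f1 + t * f2)"
  shows "\<exists>C :: (nat \<Rightarrow> 'a) set. MDS_self_dual_code (s * f1 + t * f2 + 2) C"
proof -
  let ?S = "insert 0 A"
  have "0 \<notin> A" using nonzero_if_in_A by blast
  have eta': "(\<Prod>y\<in>?S-{b}. (b - y)) ^ Q = 1" if "b \<in> ?S" for b
  proof (cases "b = 0")
    case True
    hence "?S - {b} = A" using \<open>0 \<notin> A\<close> by auto
    thus ?thesis
      using True power_Q_power_of_A[of _ 1] even_Q
      by (simp add: prod_power_distrib power_minus')
  next
    case False
    hence "?S - {b} = insert 0 (A - {b})" "b \<in> A" using that by auto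
    thus ?thesis
      using eta_power_Q_eq_one[OF assms(1,2)] power_Q_power_of_A[of b 1] \<open>0 \<notin> A\<close>
      by (simp add: eta_def power_mult_distrib)
  qed
  have "\<exists>y. y\<^sup>2 = - (\<Prod>z\<in>?S-{b}. (b - z))" if "b \<in> ?S" for b
    using eta'[OF that] even_Q
    by (intro square_if_power_Q_eq_one) (simp_all add: power_minus' prod_zero_iff)
  moreover have "card ?S = s * f1 + t * f2 + 1" using card_A \<open>0 \<notin> A\<close> by simp
  ultimately show ?thesis
    using MDS_self_dual_code_extended_of_squares[of ?S] assms(3) by simp
qed

end

theorem theorem2:
  fixes r q e1 f1 e2 f2 l s t :: nat
  assumes field_card: "card (UNIV :: 'a set) = q"
    and r_pp: "prime_power r" and r_odd: "odd r"
    and q_def: "q = r ^ 2"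
    and pos: "e1 > 0" "f1 > 0" "e2 > 0" "f2 > 0"
    and fac1: "q - 1 = e1 * f1" and fac2: "q - 1 = e2 * f2"
    and l2: "l \<ge> 2"
    and e1_cong: "e1 mod 2 ^ (l + 1) = 2 ^ l"
    and e2_dvd: "2 ^ l dvd e2"
    and div1: "2 * e2 dvd e1 * (r + 1)"
    and div2: "e1 dvd e2 * (r - 1)"
    and s_range: "1 \<le> s" "s \<le> e1 div gcd e1 e2"
    and t_range: "1 \<le> t" "t \<le> e2 div gcd e1 e2"
  shows
    "(even (t * e1 * (r + 1) div (2 * e2) + (r + 1) div 2) \<and> even (s * f1 + t * f2)
        \<longrightarrow> (\<exists>C :: (nat \<Rightarrow> 'a::{field,finite}) set. MDS_self_dual_code (s * f1 + t * f2) C))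
     \<and> (even (t * e1 * (r + 1) div (2 * e2) + t * (r + 1) div 2) \<and> even ((t - 1) * (r + 1) div 2)
          \<and> odd (s * f1 + t * f2)
        \<longrightarrow> (\<exists>C :: (nat \<Rightarrow> 'a) set. MDS_self_dual_code (s * f1 + t * f2 + 1) C))
     \<and> (even (t * e1 * (r + 1) div (2 * e2) + t * (r + 1) div 2) \<and> even ((t - 1) * (r + 1) div 2)
          \<and> even (s * f1 + t * f2)
        \<longrightarrow> (\<exists>C :: (nat \<Rightarrow> 'a) set. MDS_self_dual_code (s * f1 + t * f2 + 2) C))"
proof -
  obtain w :: 'a where "w \<noteq> 0" "\<forall>x. x \<noteq> 0 \<longrightarrow> (\<exists>i. x = w ^ i)"
    using finite_field_has_primitive_element by blast
  then interpret coset_construction r q e1 f1 e2 f2 l s t w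
    using assms by unfold_locales auto
  show ?thesis
    unfolding T_mult h_mult
    using MDS_self_dual_code_A MDS_self_dual_code_A_extended MDS_self_dual_code_A_zero by blast
qed

end
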